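(* For a deformation tensor $\varphi$ with $|\varphi|<1$, the obstruction density $\mathcal O(\varphi)$ (computed with respect to $\theta$) equals $(1-|\varphi|^2)^{-9}$ times a polynomial (with constant coefficients, independent of $\varphi$) in $\varphi$, $\bar\varphi$ and their iterated $Z_1$, $Z_{\bar1}$ derivatives of order at most $6$, such that in each monomial the total number of derivatives falling on the factors is at most $6$.
   Context: Let $S^3=\{(z,w)\in\mathbb C^2:|z|^2+|w|^2=1\}$ with standard contact distribution $H$, standard contact form $\theta=-i(\bar z\,dz+\bar w\,dw)|_{TS^3}$, $Z_1=\bar w\,\partial_z-\bar z\,\partial_w$, $Z_{\bar1}=\overline{Z_1}$, Reeb field $T=i(z\partial_z+w\partial_w)-i(\bar z\partial_{\bar z}+\bar w\partial_{\bar w})$. Deformations: a deformation tensor is a smooth $\varphi:S^3\to\mathbb C$; if $|\varphi|<1$ it defines the CR structure on $(S^3,H)$ with $(1,0)$-bundle spanned by $\tilde Z_1=Z_1+\varphi Z_{\bar1}$. With fixed $\theta$ and coframe $(\theta,\tilde\theta^1,\tilde\theta^{\bar1})$ dual to $(T,\tilde Z_1,\tilde Z_{\bar1})$: $d\theta=i\tilde h_{1\bar1}\tilde\theta^1\wedge\tilde\theta^{\bar1}$, $\tilde h_{1\bar1}=1-|\varphi|^2$; Tanaka–Webster connection form $\tilde\omega_1{}^1$ and torsion $\tilde A_{\bar1}{}^1$ defined by $d\tilde\theta^1=\tilde\theta^1\wedge\tilde\omega_1{}^1+\tilde A_{\bar1}{}^1\theta\wedge\tilde\theta^{\bar1}$,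 $\tilde\omega_1{}^1+\overline{\tilde\omega_1{}^1}=\tilde h^{1\bar1}d\tilde h_{1\bar1}$; scalar curvature $\tilde R$ by $d\tilde\omega_1{}^1\equiv\tilde R\tilde h_{1\bar1}\tilde\theta^1\wedge\tilde\theta^{\bar1}\pmod\theta$; $\tilde\nabla$ Tanaka–Webster covariant derivative, indices raised/lowered with $\tilde h$. Cartan tensor $\tilde Q_{11}=-\frac16\tilde\nabla_1\tilde\nabla_1\tilde R-\frac i2\tilde R\tilde A_{11}+\tilde\nabla_0\tilde A_{11}+\frac{2i}3\tilde\nabla_1\tilde\nabla^1\tilde A_{11}$; obstruction density $\mathcal O(\varphi)=\frac13(\tilde\nabla^1\tilde\nabla^1\tilde Q_{11}-i\tilde A^{11}\tilde Q_{11})$. *)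

theory Defs
  imports "HOL-Analysis.Analysis"
begin

type_synonym pt = "complex \<times> complex"
text \<open>A complex vector (a,b,c,d) stands for a d/dz + b d/dw + c d/dzbar + d d/dwbar.\<close>
type_synonym cvec = "complex \<times> complex \<times> complex \<times> complex"
type_synonym cvf = "pt \<Rightarrow> cvec"

definition S3 :: "pt set" where
  "S3 = {(z, w). (cmod z)\<^sup>2 + (cmod w)\<^sup>2 = 1}"

definition qadd :: "cvec \<Rightarrow> cvec \<Rightarrow> cvec" where
  "qadd u v = (case u of (a, b, c, d) \<Rightarrow> case v of (a', b', c', d') \<Rightarrow>
      (a + a', b + b', c + c', d + d'))"

definition qscale :: "complex \<Rightarrow> cvec \<Rightarrow> cvec" where
  "qscale k u = (case u of (a, b, c, d) \<Rightarrow> (k * a, k * b, k * c, k * d))"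

definition qconj :: "cvec \<Rightarrow> cvec" where
  "qconj u = (case u of (a, b, c, d) \<Rightarrow> (cnj c, cnj d, cnj a, cnj b))"

text \<open>Real and imaginary parts U, V (real vectors in C^2 = R^4) of a complex vector X = U + i V.\<close>
definition re_vec :: "cvec \<Rightarrow> pt" where
  "re_vec u = (case u of (a, b, c, d) \<Rightarrow> ((a + cnj c) / 2, (b + cnj d) / 2))"

definition im_vec :: "cvec \<Rightarrow> pt" where
  "im_vec u = (case u of (a, b, c, d) \<Rightarrow> ((a - cnj c) / (2 * \<i>), (b - cnj d) / (2 * \<i>)))"

definition cder :: "cvf \<Rightarrow> (pt \<Rightarrow> complex) \<Rightarrow> pt \<Rightarrow> complex" where
  "cder X f p = (let D = frechet_derivative f (at p within S3)
                 in D (re_vec (X p)) + \<i> * D (im_vec (X p)))"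

fun iterd :: "cvf list \<Rightarrow> (pt \<Rightarrow> complex) \<Rightarrow> pt \<Rightarrow> complex" where
  "iterd [] f = f"
| "iterd (X # Xs) f = cder X (iterd Xs f)"

definition Zf1 :: cvf where
  "Zf1 p = (case p of (z, w) \<Rightarrow> (cnj w, - cnj z, 0, 0))"

definition Zf1b :: cvf where
  "Zf1b p = (case p of (z, w) \<Rightarrow> (0, 0, w, - z))"

definition Tf :: cvf where
  "Tf p = (case p of (z, w) \<Rightarrow> (\<i> * z, \<i> * w, - \<i> * cnj z, - \<i> * cnj w))"

definition smoothS3 :: "(pt \<Rightarrow> complex) \<Rightarrow> bool" where
  "smoothS3 f \<longleftrightarrow> (\<forall>Xs. set Xs \<subseteq> {Tf, Zf1, Zf1b} \<longrightarrow>
      (\<forall>p\<in>S3. iterd Xs f differentiable (at p within S3)))"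

definition Zt :: "(pt \<Rightarrow> complex) \<Rightarrow> cvf" where
  "Zt \<phi> p = qadd (Zf1 p) (qscale (\<phi> p) (Zf1b p))"

definition Ztb :: "(pt \<Rightarrow> complex) \<Rightarrow> cvf" where
  "Ztb \<phi> p = qadd (Zf1b p) (qscale (cnj (\<phi> p)) (Zf1 p))"

definition frame :: "(pt \<Rightarrow> complex) \<Rightarrow> cvf list" where
  "frame \<phi> = [Tf, Zt \<phi>, Ztb \<phi>]"

definition bracket :: "cvf \<Rightarrow> cvf \<Rightarrow> cvf" where
  "bracket X Y p =
     (cder X (\<lambda>q. fst (Y q)) p - cder Y (\<lambda>q. fst (X q)) p,
      cder X (\<lambda>q. fst (snd (Y q))) p - cder Y (\<lambda>q. fst (snd (X q))) p,
      cder X (\<lambda>q. fst (snd (snd (Y q)))) p - cder Y (\<lambda>q. fst (snd (snd (X q)))) p,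
      cder X (\<lambda>q. snd (snd (snd (Y q)))) p - cder Y (\<lambda>q. snd (snd (snd (X q)))) p)"

definition frame_coeffs :: "(pt \<Rightarrow> complex) \<Rightarrow> pt \<Rightarrow> cvec \<Rightarrow> complex \<times> complex \<times> complex" where
  "frame_coeffs \<phi> p v = (THE (c0, c1, c2).
      v = qadd (qscale c0 (Tf p)) (qadd (qscale c1 (Zt \<phi> p)) (qscale c2 (Ztb \<phi> p))))"

text \<open>1-forms are represented as maps pt => cvec => complex.\<close>
definition theta :: "pt \<Rightarrow> cvec \<Rightarrow> complex" where
  "theta p v = (case p of (z, w) \<Rightarrow> case v of (a, b, c, d) \<Rightarrow> - \<i> * (cnj z * a + cnj w * b))"

text \<open>The coframe (theta, theta^1, theta^1bar) dual to (T, Zt_1, Zt_1bar).\<close>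
definition th1 :: "(pt \<Rightarrow> complex) \<Rightarrow> pt \<Rightarrow> cvec \<Rightarrow> complex" where
  "th1 \<phi> p v = fst (snd (frame_coeffs \<phi> p v))"

definition th1b :: "(pt \<Rightarrow> complex) \<Rightarrow> pt \<Rightarrow> cvec \<Rightarrow> complex" where
  "th1b \<phi> p v = snd (snd (frame_coeffs \<phi> p v))"

definition frame_form :: "(pt \<Rightarrow> complex) \<Rightarrow> pt \<Rightarrow> complex \<times> complex \<times> complex \<Rightarrow> cvec \<Rightarrow> complex" where
  "frame_form \<phi> p wv v = (case frame_coeffs \<phi> p v of (c0, c1, c2) \<Rightarrow>
      case wv of (w0, w1, w2) \<Rightarrow> w0 * c0 + w1 * c1 + w2 * c2)"

text \<open>Wedge product convention: (a ^ b)(X,Y) = a(X)b(Y) - a(Y)b(X), consistent with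
  d a(X,Y) = X(a(Y)) - Y(a(X)) - a([X,Y]).\<close>
definition wedge :: "(cvec \<Rightarrow> complex) \<Rightarrow> (cvec \<Rightarrow> complex) \<Rightarrow> cvec \<Rightarrow> cvec \<Rightarrow> complex" where
  "wedge \<alpha> \<beta> u v = \<alpha> u * \<beta> v - \<alpha> v * \<beta> u"

definition dform1 :: "(pt \<Rightarrow> cvec \<Rightarrow> complex) \<Rightarrow> cvf \<Rightarrow> cvf \<Rightarrow> pt \<Rightarrow> complex" where
  "dform1 \<alpha> X Y p = cder X (\<lambda>q. \<alpha> q (Y q)) p - cder Y (\<lambda>q. \<alpha> q (X q)) p - \<alpha> p (bracket X Y p)"

definition ht :: "(pt \<Rightarrow> complex) \<Rightarrow> pt \<Rightarrow> complex" where
  "ht \<phi> p = complex_of_real (1 - (cmod (\<phi> p))\<^sup>2)"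

text \<open>Tanaka--Webster connection form omega_1^1 (by its values on the frame) and torsion
  A_{1bar}^1 at p, defined by the structure equations
  d theta^1 = theta^1 ^ omega + A theta ^ theta^1bar and omega + omegabar = h^{-1} dh.\<close>
definition tw :: "(pt \<Rightarrow> complex) \<Rightarrow> pt \<Rightarrow> (complex \<times> complex \<times> complex) \<times> complex" where
  "tw \<phi> p = (THE (wv, A).
      (\<forall>X\<in>set (frame \<phi>). \<forall>Y\<in>set (frame \<phi>).
         dform1 (th1 \<phi>) X Y p
           = wedge (th1 \<phi> p) (frame_form \<phi> p wv) (X p) (Y p)
             + A * wedge (theta p) (th1b \<phi> p) (X p) (Y p)) \<and>
      (\<forall>X\<in>set (frame \<phi>).
         frame_form \<phi> p wv (X p) + cnj (frame_form \<phi> p wv (qconj (X p)))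
           = cder X (ht \<phi>) p / ht \<phi> p))"

definition omega :: "(pt \<Rightarrow> complex) \<Rightarrow> pt \<Rightarrow> cvec \<Rightarrow> complex" where
  "omega \<phi> p v = frame_form \<phi> p (fst (tw \<phi> p)) v"

definition omegab :: "(pt \<Rightarrow> complex) \<Rightarrow> pt \<Rightarrow> cvec \<Rightarrow> complex" where
  "omegab \<phi> p v = cnj (omega \<phi> p (qconj v))"

definition torsion :: "(pt \<Rightarrow> complex) \<Rightarrow> pt \<Rightarrow> complex" where
  "torsion \<phi> p = snd (tw \<phi> p)"

text \<open>Scalar curvature: d omega = R h theta^1 ^ theta^1bar (mod theta).\<close>
definition scal :: "(pt \<Rightarrow> complex) \<Rightarrow> pt \<Rightarrow> complex" where
  "scal \<phi> p = (THE r. \<exists>bv. \<forall>X\<in>set (frame \<phi>). \<forall>Y\<in>set (frame \<phi>).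
      dform1 (omega \<phi>) X Y p - r * ht \<phi> p * wedge (th1 \<phi> p) (th1b \<phi> p) (X p) (Y p)
        = wedge (theta p) (frame_form \<phi> p bv) (X p) (Y p))"

text \<open>Tanaka--Webster covariant derivative along X of the component F of a tensor with
  net k unbarred lower indices (lower minus upper) and net l barred lower indices.\<close>
definition cov :: "(pt \<Rightarrow> complex) \<Rightarrow> int \<Rightarrow> int \<Rightarrow> cvf \<Rightarrow> (pt \<Rightarrow> complex) \<Rightarrow> pt \<Rightarrow> complex" where
  "cov \<phi> k l X F p = cder X F p - of_int k * omega \<phi> p (X p) * F p
                     - of_int l * omegab \<phi> p (X p) * F p"

text \<open>A_{1bar 1bar} = h_{1 1bar} A_{1bar}^1, A_{11} = conj A_{1bar 1bar},
  A^{11} = h^{1 1bar} h^{1 1bar} A_{1bar 1bar}.\<close>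
definition Abb :: "(pt \<Rightarrow> complex) \<Rightarrow> pt \<Rightarrow> complex" where
  "Abb \<phi> p = ht \<phi> p * torsion \<phi> p"

definition A11 :: "(pt \<Rightarrow> complex) \<Rightarrow> pt \<Rightarrow> complex" where
  "A11 \<phi> p = cnj (Abb \<phi> p)"

definition Aup :: "(pt \<Rightarrow> complex) \<Rightarrow> pt \<Rightarrow> complex" where
  "Aup \<phi> p = inverse (ht \<phi> p) * inverse (ht \<phi> p) * Abb \<phi> p"

definition Q11 :: "(pt \<Rightarrow> complex) \<Rightarrow> pt \<Rightarrow> complex" where
  "Q11 \<phi> p =
     - (1/6) * cov \<phi> 1 0 (Zt \<phi>) (cov \<phi> 0 0 (Zt \<phi>) (scal \<phi>)) p
     - (\<i>/2) * scal \<phi> p * A11 \<phi> p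
     + cov \<phi> 2 0 Tf (A11 \<phi>) p
     + (2*\<i>/3) * cov \<phi> 1 0 (Zt \<phi>)
                   (\<lambda>q. inverse (ht \<phi> q) * cov \<phi> 2 0 (Ztb \<phi>) (A11 \<phi>) q) p"

definition obstruction :: "(pt \<Rightarrow> complex) \<Rightarrow> pt \<Rightarrow> complex" where
  "obstruction \<phi> p = (1/3) *
     (inverse (ht \<phi> p) * cov \<phi> 1 0 (Ztb \<phi>)
        (\<lambda>q. inverse (ht \<phi> q) * cov \<phi> 2 0 (Ztb \<phi>) (Q11 \<phi>) q) p
      - \<i> * Aup \<phi> p * Q11 \<phi> p)"

text \<open>A jet variable (b, ds): b = True means phibar, otherwise phi; ds lists the derivatives
  (False = Z_1, True = Z_1bar), applied as Z_{ds!0}(Z_{ds!1}(... phi)).\<close>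
type_synonym jetvar = "bool \<times> bool list"

definition jet :: "(pt \<Rightarrow> complex) \<Rightarrow> jetvar \<Rightarrow> pt \<Rightarrow> complex" where
  "jet \<phi> v = iterd (map (\<lambda>d. if d then Zf1b else Zf1) (snd v))
                 (if fst v then (\<lambda>q. cnj (\<phi> q)) else \<phi>)"

text \<open>A polynomial with constant complex coefficients: list of monomials (coefficient, factors).\<close>
type_synonym jetpoly = "(complex \<times> jetvar list) list"

definition polyval :: "jetpoly \<Rightarrow> (pt \<Rightarrow> complex) \<Rightarrow> pt \<Rightarrow> complex" where
  "polyval P \<phi> p = (\<Sum>m\<leftarrow>P. fst m * (\<Prod>v\<leftarrow>snd m. jet \<phi> v p))"

definition mon_order :: "jetvar list \<Rightarrow> nat" where
  "mon_order fs = (\<Sum>v\<leftarrow>fs. length (snd v))"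

end

theory Submission
  imports Defs
begin

text \<open>
  Everything is computed in the global frame \<open>(T, Z\<^sub>1, Z\<^sub>1bar)\<close> of the standard sphere.
  The deformed frame \<open>(T, Zt, Ztb)\<close> has coefficients \<open>1, \<phi>, \<phi>bar\<close>, so its dual coframe has
  coefficients that are polynomials in \<open>\<phi>, \<phi>bar\<close> divided by \<open>h = 1 - |\<phi>|\<^sup>2\<close>. Brackets of the
  frame, and hence the Tanaka--Webster connection form and torsion, are quotients \<open>P / h\<close> with
  \<open>P\<close> a polynomial in the jets of \<open>\<phi>\<close> of order at most two. Differentiating such a quotient
  \<open>P / h\<^sup>k\<close> along \<open>Z\<^sub>1\<close> or \<open>Z\<^sub>1bar\<close> gives one of the form \<open>P' / h\<^sup>k\<^sup>+\<^sup>1\<close> with one more derivative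
  on \<open>P'\<close>; along \<open>T = i [Z\<^sub>1, Z\<^sub>1bar]\<close> it costs two derivatives. Counting through the
  definitions, \<open>R\<close> has order 2 over \<open>h\<^sup>3\<close>, \<open>Q\<^sub>1\<^sub>1\<close> order 4 over \<open>h\<^sup>5\<close>, and the obstruction
  density order 6 over \<open>h\<^sup>9\<close>.

  The only analytic input is the commutator \<open>[Z\<^sub>1, Z\<^sub>1bar] = -i T\<close> on functions on \<open>S\<^sup>3\<close>,
  obtained from the symmetry of the second derivative of the radial extension \<open>f (q / |q|)\<close>.
\<close>

section \<open>Tangential derivatives on S^3\<close>

lemma S3_norm: "S3 = {q. norm q = 1}"
  unfolding S3_def by (auto simp: norm_prod_def)

lemma S3_nonzero: "p \<in> S3 \<Longrightarrow> (p::pt) \<noteq> 0"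
  by (auto simp: S3_norm)

lemma sgn_S3_eq: "p \<in> S3 \<Longrightarrow> sgn p = p"
  by (simp add: S3_norm sgn_div_norm)

lemma S3_curve_with_velocity:
  assumes p: "p \<in> S3" and u: "inner p u = 0"
  obtains g :: "real \<Rightarrow> pt" where "range g \<subseteq> S3" "g 0 = p" "(g has_derivative (\<lambda>t. t *\<^sub>R u)) (at 0)"
proof (cases "u = 0")
  case True
  then show ?thesis using that[of "\<lambda>_. p"] p by (auto intro: derivative_eq_intros)
next
  case False
  define c where "c = norm u"
  have c: "c > 0" using False by (simp add: c_def)
  have np: "norm p = 1" using p by (simp add: S3_norm)
  define g where "g t = cos (t*c) *\<^sub>R p + (sin (t*c)/c) *\<^sub>R u" for t :: real
  have "g t \<in> S3" for t
  proof -
    have "(norm (g t))\<^sup>2 = (cos (t*c))\<^sup>2 * (norm p)\<^sup>2 + (sin (t*c)/c)\<^sup>2 * (norm u)\<^sup>2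
          + 2 * (cos (t*c) * (sin (t*c)/c)) * inner p u"
      unfolding g_def power2_norm_eq_inner
      by (simp add: inner_add_left inner_add_right inner_commute algebra_simps power2_eq_square)
    also have "\<dots> = 1" using c np u by (simp add: c_def field_simps)
    finally show ?thesis by (simp add: S3_norm power2_eq_1_iff) (smt (verit) norm_ge_zero)
  qed
  moreover have "(g has_vector_derivative ((- sin (0*c) * c) *\<^sub>R p + (cos (0*c) * c / c) *\<^sub>R u)) (at 0)"
    unfolding g_def by (auto intro!: derivative_eq_intros)
  then have "(g has_derivative (\<lambda>t. t *\<^sub>R u)) (at 0)"
    using c by (simp add: has_vector_derivative_def)
  ultimately show ?thesis using that[of g] by (auto simp: g_def)
qed

lemma derivative_S3_unique:
  assumes p: "p \<in> S3" and u: "inner p u = 0"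
    and d1: "(f has_derivative D1) (at p within S3)"
    and d2: "(f has_derivative D2) (at p within S3)"
  shows "D1 u = D2 u"
proof -
  obtain g where sub: "range g \<subseteq> S3" and g0: "g 0 = p" and gd: "(g has_derivative (\<lambda>t. t *\<^sub>R u)) (at 0)"
    using S3_curve_with_velocity[OF p u] .
  have ch: "((f \<circ> g) has_derivative (D \<circ> (\<lambda>t. t *\<^sub>R u))) (at 0)"
    if "(f has_derivative D) (at p within S3)" for D
  proof -
    have "(f has_derivative D) (at (g 0) within range g)"
      using has_derivative_subset[OF that sub] g0 by simp
    then show ?thesis using diff_chain_within[of g "\<lambda>t. t *\<^sub>R u" 0 UNIV f D] gd by simp
  qed
  have "D1 \<circ> (\<lambda>t. t *\<^sub>R u) = D2 \<circ> (\<lambda>t. t *\<^sub>R u)"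
    using has_derivative_unique[OF ch[OF d1] ch[OF d2]] .
  then show ?thesis by (metis comp_apply scale_one)
qed

abbreviation differentiable_S3 :: "(pt \<Rightarrow> complex) \<Rightarrow> pt \<Rightarrow> bool" where
  "differentiable_S3 f p \<equiv> f differentiable (at p within S3)"

definition cvec_apply :: "(pt \<Rightarrow> complex) \<Rightarrow> cvec \<Rightarrow> complex" where
  "cvec_apply D X = D (re_vec X) + \<i> * D (im_vec X)"

definition tangent :: "pt \<Rightarrow> cvec \<Rightarrow> bool" where
  "tangent p X \<longleftrightarrow> inner p (re_vec X) = 0 \<and> inner p (im_vec X) = 0"

lemma cder_has_derivative:
  assumes p: "p \<in> S3" and t: "tangent p (X p)" and d: "(f has_derivative D) (at p within S3)"
  shows "cder X f p = cvec_apply D (X p)"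
proof -
  have "f differentiable (at p within S3)" using d by (auto simp: differentiable_def)
  then have d': "(f has_derivative frechet_derivative f (at p within S3)) (at p within S3)"
    by (simp add: frechet_derivative_works)
  show ?thesis
    unfolding cder_def cvec_apply_def Let_def
    using derivative_S3_unique[OF p _ d' d] t by (simp add: tangent_def)
qed

lemma has_derivative_S3_cong:
  assumes p: "p \<in> S3" and eq: "\<And>q. q \<in> S3 \<Longrightarrow> f q = g q"
  shows "(f has_derivative D) (at p within S3) \<longleftrightarrow> (g has_derivative D) (at p within S3)"
proof
  assume "(f has_derivative D) (at p within S3)"
  then show "(g has_derivative D) (at p within S3)"
    by (rule has_derivative_transform_within[where d=1]) (use p eq in auto)
next
  assume "(g has_derivative D) (at p within S3)"
  then show "(f has_derivative D) (at p within S3)"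
    by (rule has_derivative_transform_within[where d=1]) (use p eq in auto)
qed

lemma cder_S3_cong:
  assumes p: "p \<in> S3" and eq: "\<And>q. q \<in> S3 \<Longrightarrow> f q = g q"
  shows "cder X f p = cder X g p"
proof -
  have "frechet_derivative f (at p within S3) = frechet_derivative g (at p within S3)"
    unfolding frechet_derivative_def using has_derivative_S3_cong[OF p eq] by simp
  then show ?thesis by (simp add: cder_def)
qed

lemma differentiable_S3_cong:
  assumes p: "p \<in> S3" and eq: "\<And>q. q \<in> S3 \<Longrightarrow> f q = g q"
  shows "f differentiable (at p within S3) \<longleftrightarrow> g differentiable (at p within S3)"
  unfolding differentiable_def using has_derivative_S3_cong[OF p eq] by simp

lemma re_vec_add: "re_vec (qadd u v) = re_vec u + re_vec v"
  by (cases u; cases v) (auto simp: re_vec_def qadd_def add_divide_distrib)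

lemma im_vec_add: "im_vec (qadd u v) = im_vec u + im_vec v"
  by (cases u; cases v) (auto simp: im_vec_def qadd_def field_simps)

lemma re_vec_scale: "re_vec (qscale k u) = Re k *\<^sub>R re_vec u - Im k *\<^sub>R im_vec u"
  by (cases u; cases k) (auto simp: re_vec_def im_vec_def qscale_def scaleR_conv_of_real Complex_eq
      field_simps)

lemma im_vec_scale: "im_vec (qscale k u) = Re k *\<^sub>R im_vec u + Im k *\<^sub>R re_vec u"
  by (cases u; cases k) (auto simp: re_vec_def im_vec_def qscale_def scaleR_conv_of_real Complex_eq
      field_simps)

lemma re_vec_qconj: "re_vec (qconj u) = re_vec u"
  by (cases u) (simp add: re_vec_def qconj_def add.commute)

lemma im_vec_qconj: "im_vec (qconj u) = - im_vec u"
  by (cases u) (simp add: im_vec_def qconj_def field_simps)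

lemma cvec_apply_qadd: "linear D \<Longrightarrow> cvec_apply D (qadd u v) = cvec_apply D u + cvec_apply D v"
  by (simp add: cvec_apply_def re_vec_add im_vec_add linear_add algebra_simps)

lemma cvec_apply_qscale: "linear D \<Longrightarrow> cvec_apply D (qscale k u) = k * cvec_apply D u"
  apply (simp add: cvec_apply_def re_vec_scale im_vec_scale linear_add linear_diff linear_scale)
  apply (simp add: scaleR_conv_of_real complex_eq_iff algebra_simps)
  done

lemma tangent_qadd: "tangent p u \<Longrightarrow> tangent p v \<Longrightarrow> tangent p (qadd u v)"
  by (simp add: tangent_def re_vec_add im_vec_add inner_add_right)

lemma tangent_qscale: "tangent p u \<Longrightarrow> tangent p (qscale k u)"
  by (simp add: tangent_def re_vec_scale im_vec_scale inner_diff_right inner_add_right)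

lemma tangent_qconj: "tangent p u \<Longrightarrow> tangent p (qconj u)"
  by (simp add: tangent_def re_vec_qconj im_vec_qconj)

lemma tangent_Zf1: "tangent p (Zf1 p)"
  by (cases p) (simp add: tangent_def Zf1_def re_vec_def im_vec_def inner_complex_def Re_divide
      Im_divide algebra_simps)

lemma tangent_Zf1b: "tangent p (Zf1b p)"
  by (cases p) (simp add: tangent_def Zf1b_def re_vec_def im_vec_def inner_complex_def Re_divide
      Im_divide algebra_simps)

lemma tangent_Tf: "tangent p (Tf p)"
  by (cases p) (simp add: tangent_def Tf_def re_vec_def im_vec_def inner_complex_def algebra_simps)

lemma tangent_Zt: "tangent p (Zt \<phi> p)"
  by (simp add: Zt_def tangent_qadd tangent_qscale tangent_Zf1 tangent_Zf1b)

lemma tangent_Ztb: "tangent p (Ztb \<phi> p)"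
  by (simp add: Ztb_def tangent_qadd tangent_qscale tangent_Zf1 tangent_Zf1b)

lemma cder_const:
  assumes "p \<in> S3" "tangent p (X p)" shows "cder X (\<lambda>q. c) p = 0"
  using cder_has_derivative[of p X "\<lambda>q. c", OF assms has_derivative_const] by (simp add: cvec_apply_def)

lemma cder_add:
  assumes p: "p \<in> S3" and t: "tangent p (X p)" and f: "differentiable_S3 f p"
      and g: "differentiable_S3 g p"
  shows "cder X (\<lambda>q. f q + g q) p = cder X f p + cder X g p"
proof -
  obtain Df Dg where df: "(f has_derivative Df) (at p within S3)"
      and dg: "(g has_derivative Dg) (at p within S3)"
    using f g by (auto simp: differentiable_def)
  show ?thesis
    using cder_has_derivative[of p X, OF p t has_derivative_add[OF df dg]] cder_has_derivative[of p X,
        OF p t df] cder_has_derivative[of p X, OF p t dg]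
    by (simp add: cvec_apply_def algebra_simps)
qed

lemma cder_diff:
  assumes p: "p \<in> S3" and t: "tangent p (X p)" and f: "differentiable_S3 f p"
      and g: "differentiable_S3 g p"
  shows "cder X (\<lambda>q. f q - g q) p = cder X f p - cder X g p"
proof -
  obtain Df Dg where df: "(f has_derivative Df) (at p within S3)"
      and dg: "(g has_derivative Dg) (at p within S3)"
    using f g by (auto simp: differentiable_def)
  show ?thesis
    using cder_has_derivative[of p X, OF p t has_derivative_diff[OF df dg]] cder_has_derivative[of p X,
        OF p t df] cder_has_derivative[of p X, OF p t dg]
    by (simp add: cvec_apply_def algebra_simps)
qed

lemma cder_mult:
  assumes p: "p \<in> S3" and t: "tangent p (X p)" and f: "differentiable_S3 f p"
      and g: "differentiable_S3 g p"
  shows "cder X (\<lambda>q. f q * g q) p = f p * cder X g p + g p * cder X f p"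
proof -
  obtain Df Dg where df: "(f has_derivative Df) (at p within S3)"
      and dg: "(g has_derivative Dg) (at p within S3)"
    using f g by (auto simp: differentiable_def)
  show ?thesis
    using cder_has_derivative[of p X, OF p t has_derivative_mult[OF df dg]] cder_has_derivative[of p X,
        OF p t df] cder_has_derivative[of p X, OF p t dg]
    by (simp add: cvec_apply_def algebra_simps)
qed

lemma cder_quot:
  assumes p: "p \<in> S3" and t: "tangent p (X p)" and g: "differentiable_S3 g p"
      and h: "differentiable_S3 h p" and nz: "h p \<noteq> 0"
  shows "cder X (\<lambda>q. g q / h q ^ k) p = (h p * cder X g p - of_nat k * g p * cder X h p)
      / h p ^ (k + 1)"
proof -
  obtain Dg Dh where dg: "(g has_derivative Dg) (at p within S3)"
      and dh: "(h has_derivative Dh) (at p within S3)"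
    using g h by (auto simp: differentiable_def)
  have nzk: "h p ^ k \<noteq> 0" using nz by simp
  have d: "((\<lambda>q. g q / h q ^ k) has_derivative
     (\<lambda>y. - g p * (inverse (h p ^ k) * (of_nat k * Dh y * h p ^ (k - 1)) * inverse (h p ^ k))
          + Dg y / h p ^ k))
     (at p within S3)"
    using has_derivative_divide[OF dg has_derivative_power[OF dh] nzk] .
  have e1: "cder X g p = Dg (re_vec (X p)) + \<i> * Dg (im_vec (X p))" using cder_has_derivative[of p X,
      OF p t dg] by (simp add: cvec_apply_def)
  have e2: "cder X h p = Dh (re_vec (X p)) + \<i> * Dh (im_vec (X p))" using cder_has_derivative[of p X,
      OF p t dh] by (simp add: cvec_apply_def)
  let ?r = "re_vec (X p)" and ?i = "im_vec (X p)"
  have c: "cder X (\<lambda>q. g q / h q ^ k) p =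
      (- g p * (inverse (h p ^ k) * (of_nat k * Dh ?r * h p ^ (k - 1)) * inverse (h p ^ k)) + Dg ?r
          / h p ^ k)
      + \<i> * (- g p * (inverse (h p ^ k) * (of_nat k * Dh ?i * h p ^ (k - 1)) * inverse (h p ^ k))
          + Dg ?i / h p ^ k)"
    using cder_has_derivative[of p X, OF p t d] by (simp add: cvec_apply_def)
  show ?thesis
  proof (cases k)
    case 0
    then show ?thesis unfolding c e1 e2 using nz by (simp add: field_simps)
  next
    case (Suc k')
    then show ?thesis unfolding c e1 e2 using nz by (simp add: field_simps)
  qed
qed

lemma cder_cnj:
  assumes p: "p \<in> S3" and t: "tangent p (X p)" and f: "differentiable_S3 f p" and Y: "Y p = qconj (X p)"
  shows "cder X (\<lambda>q. cnj (f q)) p = cnj (cder Y f p)"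
proof -
  obtain Df where df: "(f has_derivative Df) (at p within S3)"
    using f by (auto simp: differentiable_def)
  have lin: "linear Df" using df by (rule has_derivative_linear)
  have tY: "tangent p (Y p)" using t Y by (simp add: tangent_qconj)
  show ?thesis
    using cder_has_derivative[of p X, OF p t has_derivative_cnj[OF df]] cder_has_derivative[of p Y,
        OF p tY df] Y
    by (simp add: cvec_apply_def re_vec_qconj im_vec_qconj linear_neg[OF lin])
qed

lemma cder_qadd_qscale:
  assumes p: "p \<in> S3" and tX: "tangent p (X p)" and tY: "tangent p (Y p)" and f: "differentiable_S3 f p"
  shows "cder (\<lambda>q. qadd (X q) (qscale (k q) (Y q))) f p = cder X f p + k p * cder Y f p"
proof -
  obtain Df where df: "(f has_derivative Df) (at p within S3)"
    using f by (auto simp: differentiable_def)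
  have lin: "linear Df" using df by (rule has_derivative_linear)
  have t: "tangent p (qadd (X p) (qscale (k p) (Y p)))" using tX tY
    by (simp add: tangent_qadd tangent_qscale)
  show ?thesis
    using cder_has_derivative[of p "\<lambda>q. qadd (X q) (qscale (k q) (Y q))",
        OF p t df] cder_has_derivative[of p X, OF p tX df] cder_has_derivative[of p Y, OF p tY df]
    by (simp add: cvec_apply_qadd[OF lin] cvec_apply_qscale[OF lin])
qed

lemma cder_Zt:
  assumes p: "p \<in> S3" and f: "differentiable_S3 f p"
  shows "cder (Zt \<phi>) f p = cder Zf1 f p + \<phi> p * cder Zf1b f p"
  using cder_qadd_qscale[of p Zf1 Zf1b, OF p tangent_Zf1 tangent_Zf1b f, of \<phi>]
  by (simp add: Zt_def[abs_def])

lemma cder_Ztb: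
  assumes p: "p \<in> S3" and f: "differentiable_S3 f p"
  shows "cder (Ztb \<phi>) f p = cder Zf1b f p + cnj (\<phi> p) * cder Zf1 f p"
  using cder_qadd_qscale[of p Zf1b Zf1, OF p tangent_Zf1b tangent_Zf1 f, of "\<lambda>q. cnj (\<phi> q)"]
  by (simp add: Ztb_def[abs_def])

section \<open>Symmetry of second derivatives\<close>

definition second_diff :: "('a::real_vector \<Rightarrow> 'b::ab_group_add) \<Rightarrow> 'a \<Rightarrow> 'a \<Rightarrow> 'a \<Rightarrow> real \<Rightarrow> 'b" where
  "second_diff F p u v t = F (p + t *\<^sub>R u + t *\<^sub>R v) - F (p + t *\<^sub>R u) - F (p + t *\<^sub>R v) + F p"

lemma second_diff_commute: "second_diff F p v u t = second_diff F p u v t"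
  by (simp add: second_diff_def add.commute add.left_commute)

lemma second_diff_mean_value:
  fixes F :: "'a::real_normed_vector \<Rightarrow> 'b::real_inner"
  assumes dF: "\<And>q. q \<in> U \<Longrightarrow> (F has_derivative DF q) (at q)"
    and U: "\<And>s. 0 \<le> s \<Longrightarrow> s \<le> t \<Longrightarrow> p + s *\<^sub>R u \<in> U \<and> p + s *\<^sub>R u + t *\<^sub>R v \<in> U"
    and t: "0 < t"
  shows "\<exists>s\<in>{0<..<t}. norm (second_diff F p u v t - (t*t) *\<^sub>R c)
           \<le> t * norm (DF (p + s *\<^sub>R u + t *\<^sub>R v) u - DF (p + s *\<^sub>R u) u - t *\<^sub>R c)"
proof -
  define \<psi> where "\<psi> s = F (p + s *\<^sub>R u + t *\<^sub>R v) - F (p + s *\<^sub>R u) - (s * t) *\<^sub>R c" for s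
  define \<psi>' where "\<psi>' s h = DF (p + s *\<^sub>R u + t *\<^sub>R v) (h *\<^sub>R u) - DF (p + s *\<^sub>R u) (h *\<^sub>R u)
                           - (h * t) *\<^sub>R c" for s h
  have der: "(\<psi> has_derivative \<psi>' s) (at s)" if s: "0 \<le> s" "s \<le> t" for s
  proof -
    have g1: "((\<lambda>s. p + s *\<^sub>R u + t *\<^sub>R v) has_derivative (\<lambda>h. h *\<^sub>R u)) (at s)"
      and g2: "((\<lambda>s. p + s *\<^sub>R u) has_derivative (\<lambda>h. h *\<^sub>R u)) (at s)"
      by (auto intro!: derivative_eq_intros)
    have c1: "((\<lambda>s. F (p + s *\<^sub>R u + t *\<^sub>R v)) has_derivative
        (\<lambda>h. DF (p + s *\<^sub>R u + t *\<^sub>R v) (h *\<^sub>R u))) (at s)"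
      using has_derivative_compose[OF g1 dF] U[OF s] by simp
    have c2: "((\<lambda>s. F (p + s *\<^sub>R u)) has_derivative (\<lambda>h. DF (p + s *\<^sub>R u) (h *\<^sub>R u))) (at s)"
      using has_derivative_compose[OF g2 dF] U[OF s] by simp
    show ?thesis unfolding \<psi>_def \<psi>'_def[abs_def]
      by (intro has_derivative_diff c1 c2) (auto intro!: derivative_eq_intros)
  qed
  have "continuous_on {0..t} \<psi>"
    using der by (meson atLeastAtMost_iff continuous_at_imp_continuous_on has_derivative_continuous)
  then obtain s where s: "s \<in> {0<..<t}" and mv: "norm (\<psi> t - \<psi> 0) \<le> norm (\<psi>' s (t - 0))"
    using mvt_general[OF t, of \<psi> \<psi>'] der by force
  have "linear (DF (p + s *\<^sub>R u + t *\<^sub>R v))" "linear (DF (p + s *\<^sub>R u))"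
    using dF U[of s] s by (auto intro: has_derivative_linear)
  then have "\<psi>' s t = t *\<^sub>R (DF (p + s *\<^sub>R u + t *\<^sub>R v) u - DF (p + s *\<^sub>R u) u - t *\<^sub>R c)"
    by (simp add: \<psi>'_def linear_scale scaleR_diff_right)
  moreover have "\<psi> t - \<psi> 0 = second_diff F p u v t - (t*t) *\<^sub>R c"
    by (simp add: \<psi>_def second_diff_def)
  ultimately show ?thesis
    using s mv t by (intro bexI[of _ s]) auto
qed

lemma norm_add_scaleR_le:
  fixes u v :: "'a::real_normed_vector"
  assumes "0 \<le> s" "s \<le> t"
  shows "norm (s *\<^sub>R u + t *\<^sub>R v) + norm (s *\<^sub>R u) \<le> t * (2 * norm u + norm v)"
proof -
  have "norm (s *\<^sub>R u + t *\<^sub>R v) + norm (s *\<^sub>R u) \<le> 2 * (s * norm u) + t * norm v"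
    using norm_triangle_ineq[of "s *\<^sub>R u" "t *\<^sub>R v"] assms by simp
  also have "\<dots> \<le> t * (2 * norm u + norm v)"
    using mult_right_mono[OF assms(2) norm_ge_zero[of u]] by (simp add: algebra_simps)
  finally show ?thesis .
qed

lemma second_diff_estimate_at:
  fixes F :: "'a::real_normed_vector \<Rightarrow> 'b::real_inner"
  assumes dF: "\<And>q. q \<in> U \<Longrightarrow> (F has_derivative DF q) (at q)"
    and U: "ball p \<delta> \<subseteq> U" and lin: "linear Hu" and \<epsilon>: "0 \<le> \<epsilon>"
    and rb: "\<And>y. norm (y - p) < \<delta> \<Longrightarrow> norm (DF y u - DF p u - Hu (y - p)) \<le> \<epsilon> * norm (y - p)"
    and t: "0 < t" "t * (2 * norm u + norm v) < \<delta>"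
  shows "norm (second_diff F p u v t - (t*t) *\<^sub>R Hu v) \<le> t * (\<epsilon> * (t * (2 * norm u + norm v)))"
proof -
  define r where "r y = DF y u - DF p u - Hu (y - p)" for y
  have near: "norm (s *\<^sub>R u + t *\<^sub>R v) + norm (s *\<^sub>R u) < \<delta>" if "0 \<le> s" "s \<le> t" for s
    using norm_add_scaleR_le[OF that, of u v] t by linarith
  have inU: "p + s *\<^sub>R u \<in> U \<and> p + s *\<^sub>R u + t *\<^sub>R v \<in> U" if "0 \<le> s" "s \<le> t" for s
  proof -
    have "norm (s *\<^sub>R u) < \<delta>" "norm (s *\<^sub>R u + t *\<^sub>R v) < \<delta>"
      using near[OF that] norm_ge_zero[of "s *\<^sub>R u"] norm_ge_zero[of "s *\<^sub>R u + t *\<^sub>R v"] by linarith+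
    then show ?thesis using U unfolding subset_iff mem_ball dist_norm
      by (metis add.assoc add_diff_cancel_left' norm_minus_commute)
  qed
  obtain s where s: "0 \<le> s" "s \<le> t" and mv: "norm (second_diff F p u v t - (t*t) *\<^sub>R Hu v)
      \<le> t * norm (DF (p + s *\<^sub>R u + t *\<^sub>R v) u - DF (p + s *\<^sub>R u) u - t *\<^sub>R Hu v)"
    using second_diff_mean_value[OF dF inU t(1)] by (metis greaterThanLessThan_iff less_imp_le)
  have "DF (p + s *\<^sub>R u + t *\<^sub>R v) u - DF (p + s *\<^sub>R u) u - t *\<^sub>R Hu v
      = r (p + s *\<^sub>R u + t *\<^sub>R v) - r (p + s *\<^sub>R u)"
    by (simp add: r_def linear_add[OF lin] linear_scale[OF lin] add.assoc)
  also have "norm \<dots> \<le> \<epsilon> * (norm (s *\<^sub>R u + t *\<^sub>R v) + norm (s *\<^sub>R u))"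
    using rb[of "p + s *\<^sub>R u + t *\<^sub>R v"] rb[of "p + s *\<^sub>R u"] near[OF s] norm_triangle_ineq4
    unfolding r_def[symmetric]
    by (smt (verit, ccfv_SIG) add.assoc add_diff_cancel_left' distrib_left norm_ge_zero)
  also have "\<dots> \<le> \<epsilon> * (t * (2 * norm u + norm v))"
    using norm_add_scaleR_le[OF s, of u v] \<epsilon> by (intro mult_left_mono) auto
  finally show ?thesis using mv t by (smt (verit) mult_left_mono)
qed

lemma second_diff_estimate:
  fixes F :: "'a::real_normed_vector \<Rightarrow> 'b::real_inner"
  assumes U: "open U" "p \<in> U" and dF: "\<And>q. q \<in> U \<Longrightarrow> (F has_derivative DF q) (at q)"
    and Hu: "((\<lambda>q. DF q u) has_derivative Hu) (at p)"
    and e: "e > 0"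
  shows "\<exists>d>0. \<forall>t. 0 < t \<and> t < d \<longrightarrow> norm (second_diff F p u v t - (t*t) *\<^sub>R Hu v) \<le> e * (t*t)"
proof -
  define M where "M = 2 * norm u + norm v + 1"
  have M: "M > 0" unfolding M_def using norm_ge_zero[of u] norm_ge_zero[of v] by linarith
  obtain d1 where d1: "d1 > 0"
    and rb: "\<And>y. norm (y - p) < d1 \<Longrightarrow> norm (DF y u - DF p u - Hu (y - p)) \<le> (e / M) * norm (y - p)"
    using Hu[unfolded has_derivative_at_alt] e M by (meson divide_pos_pos)
  obtain d2 where d2: "d2 > 0" and "ball p d2 \<subseteq> U"
    using U by (meson open_contains_ball)
  then have ball: "ball p (min d1 d2) \<subseteq> U" by auto
  have "norm (second_diff F p u v t - (t*t) *\<^sub>R Hu v) \<le> e * (t*t)" if t: "0 < t" "t < min d1 d2 / M" for t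
  proof -
    have tM: "t * (2 * norm u + norm v) \<le> t * M" using t by (simp add: M_def)
    moreover have "t * M < min d1 d2" using t M by (simp add: pos_less_divide_eq)
    ultimately have "t * (2 * norm u + norm v) < min d1 d2" by linarith
    then have "norm (second_diff F p u v t - (t*t) *\<^sub>R Hu v) \<le> t * ((e / M) * (t * (2 * norm u + norm v)))"
      using second_diff_estimate_at[OF dF ball has_derivative_linear[OF Hu] _ rb t(1)] e M by simp
    also have "\<dots> \<le> t * ((e / M) * (t * M))"
      using tM t e M by (intro mult_left_mono) auto
    finally show ?thesis using M by (simp add: algebra_simps)
  qed
  moreover have "min d1 d2 / M > 0" using d1 d2 M by simp
  ultimately show ?thesis by blast
qed

lemma second_derivative_symmetric:
  fixes F :: "'a::real_normed_vector \<Rightarrow> 'b::real_inner"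
  assumes U: "open U" "p \<in> U" and dF: "\<And>q. q \<in> U \<Longrightarrow> (F has_derivative DF q) (at q)"
    and Hu: "((\<lambda>q. DF q u) has_derivative Hu) (at p)"
    and Hv: "((\<lambda>q. DF q v) has_derivative Hv) (at p)"
  shows "Hu v = Hv u"
proof (rule ccontr)
  assume "Hu v \<noteq> Hv u"
  define e where "e = norm (Hu v - Hv u) / 3"
  have e: "e > 0" using \<open>Hu v \<noteq> Hv u\<close> by (simp add: e_def)
  obtain d1 where d1: "d1 > 0" and b1: "\<And>t. 0 < t \<Longrightarrow> t < d1 \<Longrightarrow>
     norm (second_diff F p u v t - (t*t) *\<^sub>R Hu v) \<le> e * (t*t)"
    using second_diff_estimate[OF U dF Hu e, of v] by blast
  obtain d2 where d2: "d2 > 0" and b2: "\<And>t. 0 < t \<Longrightarrow> t < d2 \<Longrightarrow>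
     norm (second_diff F p u v t - (t*t) *\<^sub>R Hv u) \<le> e * (t*t)"
    using second_diff_estimate[OF U dF Hv e, of u] by (auto simp: second_diff_commute)
  define t where "t = min d1 d2 / 2"
  have t: "0 < t" "t < d1" "t < d2" using d1 d2 by (auto simp: t_def)
  define A where "A = second_diff F p u v t"
  have "norm ((t*t) *\<^sub>R (Hu v - Hv u)) \<le> norm (A - (t*t) *\<^sub>R Hv u) + norm (A - (t*t) *\<^sub>R Hu v)"
    using norm_triangle_ineq4[of "A - (t*t) *\<^sub>R Hv u" "A - (t*t) *\<^sub>R Hu v"] by (simp add: algebra_simps)
  also have "\<dots> \<le> 2 * e * (t*t)"
    using b1[OF t(1,2)] b2[OF t(1,3)] by (simp add: A_def)
  finally have "norm (Hu v - Hv u) \<le> 2 * e" using t by simp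
  then show False using e by (simp add: e_def)
qed

section \<open>The commutator of Z_1 and Z_1bar\<close>

text \<open>\<open>e1 = Re T\<close>, \<open>e2 = 2 Re Z\<^sub>1\<close>, \<open>e3 = -2 Im Z\<^sub>1\<close>, extended to all of \<open>\<complex>\<^sup>2\<close>.\<close>

definition e1 :: "pt \<Rightarrow> pt" where "e1 q = (case q of (z, w) \<Rightarrow> (\<i> * z, \<i> * w))"
definition e2 :: "pt \<Rightarrow> pt" where "e2 q = (case q of (z, w) \<Rightarrow> (cnj w, - cnj z))"
definition e3 :: "pt \<Rightarrow> pt" where "e3 q = (case q of (z, w) \<Rightarrow> (\<i> * cnj w, - (\<i> * cnj z)))"

lemma re_Tf: "re_vec (Tf q) = e1 q"
proof -
  obtain z w where q: "q = (z, w)" by (cases q)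
  have a: "cnj (- \<i> * cnj z) = \<i> * z" "cnj (- \<i> * cnj w) = \<i> * w" by simp_all
  show ?thesis unfolding q Tf_def re_vec_def e1_def by (simp only: prod.case a) simp
qed

lemma im_Tf: "im_vec (Tf q) = 0"
proof -
  obtain z w where q: "q = (z, w)" by (cases q)
  have a: "cnj (- \<i> * cnj z) = \<i> * z" "cnj (- \<i> * cnj w) = \<i> * w" by simp_all
  show ?thesis unfolding q Tf_def im_vec_def by (simp only: prod.case a) (simp add: zero_prod_def)
qed

lemma re_Zf1: "re_vec (Zf1 q) = (1/2) *\<^sub>R e2 q" and im_Zf1: "im_vec (Zf1 q) = (-1/2) *\<^sub>R e3 q"
  by (cases q; simp add: Zf1_def re_vec_def im_vec_def e2_def e3_def scaleR_conv_of_real)+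

lemma re_Zf1b: "re_vec (Zf1b q) = (1/2) *\<^sub>R e2 q" and im_Zf1b: "im_vec (Zf1b q) = (1/2) *\<^sub>R e3 q"
  by (cases q; simp add: Zf1b_def re_vec_def im_vec_def e2_def e3_def scaleR_conv_of_real)+

lemma norm_pt_square: "(norm (m::pt))\<^sup>2 = (Re (fst m) * Re (fst m) + Im (fst m) * Im (fst m)
    + Re (snd m) * Re (snd m) + Im (snd m) * Im (snd m))"
  by (cases m) (simp add: norm_prod_def cmod_power2 power2_eq_square, simp add: cmod_def
      power2_eq_square)

lemma frame_decomposition:
  fixes m x :: pt
  shows "(m \<bullet> x) *\<^sub>R m + (e1 m \<bullet> x) *\<^sub>R e1 m + (e2 m \<bullet> x) *\<^sub>R e2 m + (e3 m \<bullet> x) *\<^sub>R e3 m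
         = (norm m)\<^sup>2 *\<^sub>R x"
proof -
  obtain z w where m: "m = (z, w)" by (cases m)
  obtain a b where x: "x = (a, b)" by (cases x)
  show ?thesis
    unfolding norm_pt_square unfolding m x
    apply (simp add: e1_def e2_def e3_def inner_complex_def complex_eq_iff)
    apply (intro conjI; algebra)
    done
qed

lemma e_add: "e1 (x + y) = e1 x + e1 y" "e2 (x + y) = e2 x + e2 y" "e3 (x + y) = e3 x + e3 y"
  by (cases x; cases y; simp add: e1_def e2_def e3_def algebra_simps)+

lemma e_scale: "e1 (c *\<^sub>R x) = c *\<^sub>R e1 x" "e2 (c *\<^sub>R x) = c *\<^sub>R e2 x" "e3 (c *\<^sub>R x) = c *\<^sub>R e3 x"
  by (cases x; simp add: e1_def e2_def e3_def scaleR_conv_of_real algebra_simps)+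

lemma e_neg: "e1 (- x) = - e1 x" "e2 (- x) = - e2 x" "e3 (- x) = - e3 x"
  by (cases x; simp add: e1_def e2_def e3_def)+

lemma e_linear: "linear e1" "linear e2" "linear e3"
  by (rule linearI, simp only: e_add, simp only: e_scale)+

lemma e_bounded_linear: "bounded_linear e1" "bounded_linear e2" "bounded_linear e3"
  using e_linear by (auto simp: linear_conv_bounded_linear)

lemma e_deriv: "(e1 has_derivative e1) F" "(e2 has_derivative e2) F" "(e3 has_derivative e3) F"
  using e_bounded_linear by (simp_all add: bounded_linear_imp_has_derivative)

lemma e_orth:
  fixes q :: pt
  shows "e1 q \<bullet> q = 0" "e2 q \<bullet> q = 0" "e3 q \<bullet> q = 0"
    "e1 q \<bullet> e2 q = 0" "e1 q \<bullet> e3 q = 0" "e2 q \<bullet> e3 q = 0"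
    "e2 q \<bullet> e1 q = 0" "e3 q \<bullet> e1 q = 0" "e3 q \<bullet> e2 q = 0"
    "e1 q \<bullet> e1 q = q \<bullet> q" "e2 q \<bullet> e2 q = q \<bullet> q" "e3 q \<bullet> e3 q = q \<bullet> q"
  by (cases q; simp add: e1_def e2_def e3_def inner_complex_def; algebra)+

lemma e_compose:
  fixes q :: pt
  shows "e2 (e2 q) = - q" "e3 (e2 q) = - e1 q" "e2 (e3 q) = e1 q" "e3 (e3 q) = - q"
  by (cases q; simp add: e1_def e2_def e3_def)+

definition DS3 :: "(pt \<Rightarrow> complex) \<Rightarrow> pt \<Rightarrow> pt \<Rightarrow> complex" where
  "DS3 f m = frechet_derivative f (at m within S3)"

definition De1 :: "(pt \<Rightarrow> complex) \<Rightarrow> pt \<Rightarrow> complex" where "De1 f m = cder Tf f m"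

definition De2 :: "(pt \<Rightarrow> complex) \<Rightarrow> pt \<Rightarrow> complex" where "De2 f m = cder Zf1 f m + cder Zf1b f m"

definition De3 :: "(pt \<Rightarrow> complex) \<Rightarrow> pt \<Rightarrow> complex" where "De3 f m = \<i> * (cder Zf1 f m - cder Zf1b f m)"

lemma DS3_works: "differentiable_S3 f m \<Longrightarrow> (f has_derivative DS3 f m) (at m within S3)"
  by (simp add: DS3_def frechet_derivative_works)

lemma DS3_linear: "differentiable_S3 f m \<Longrightarrow> linear (DS3 f m)"
  using DS3_works has_derivative_linear by blast

lemma DS3_e:
  assumes d: "differentiable_S3 f m"
  shows "DS3 f m (e1 m) = De1 f m" "DS3 f m (e2 m) = De2 f m" "DS3 f m (e3 m) = De3 f m"
proof -
  have l: "linear (DS3 f m)" using DS3_linear[OF d] .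
  have c1: "cder Tf f m = DS3 f m (e1 m)"
    by (simp add: cder_def Let_def DS3_def[symmetric] re_Tf im_Tf linear_0[OF l])
  have c2: "cder Zf1 f m = (1/2) * DS3 f m (e2 m) - (\<i>/2) * DS3 f m (e3 m)"
    by (simp add: cder_def Let_def DS3_def[symmetric] re_Zf1 im_Zf1 linear_scale[OF l] linear_neg[OF l]
        scaleR_conv_of_real)
  have c3: "cder Zf1b f m = (1/2) * DS3 f m (e2 m) + (\<i>/2) * DS3 f m (e3 m)"
    by (simp add: cder_def Let_def DS3_def[symmetric] re_Zf1b im_Zf1b linear_scale[OF l]
        scaleR_conv_of_real)
  show "DS3 f m (e1 m) = De1 f m" using c1 by (simp add: De1_def)
  show "DS3 f m (e2 m) = De2 f m" using c2 c3 by (simp add: De2_def)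
  have "cder Zf1 f m - cder Zf1b f m = - \<i> * DS3 f m (e3 m)" using c2 c3 by (simp add: algebra_simps)
  then show "DS3 f m (e3 m) = De3 f m" by (simp add: De3_def)
qed

lemma DS3_tangent:
  assumes m: "m \<in> S3" and t: "m \<bullet> t = 0" and d: "differentiable_S3 f m"
  shows "DS3 f m t
    = of_real (e1 m \<bullet> t) * De1 f m + of_real (e2 m \<bullet> t) * De2 f m + of_real (e3 m \<bullet> t) * De3 f m"
proof -
  have l: "linear (DS3 f m)" using DS3_linear[OF d] .
  have nm: "norm m = 1" using m by (simp add: S3_norm)
  have "t = (e1 m \<bullet> t) *\<^sub>R e1 m + (e2 m \<bullet> t) *\<^sub>R e2 m + (e3 m \<bullet> t) *\<^sub>R e3 m"
    using frame_decomposition[of m t] nm t by (simp add: add.assoc)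
  then have "DS3 f m t = DS3 f m ((e1 m \<bullet> t) *\<^sub>R e1 m + (e2 m \<bullet> t) *\<^sub>R e2 m + (e3 m \<bullet> t) *\<^sub>R e3 m)"
    by simp
  also have "\<dots> = of_real (e1 m \<bullet> t) * De1 f m + of_real (e2 m \<bullet> t) * De2 f m + of_real (e3 m \<bullet> t)
      * De3 f m"
    by (simp add: linear_add[OF l] linear_scale[OF l] DS3_e[OF d] scaleR_conv_of_real)
  finally show ?thesis .
qed

definition Dsgn :: "pt \<Rightarrow> pt \<Rightarrow> pt" where
  "Dsgn q v = inverse (norm q) *\<^sub>R v - ((q \<bullet> v) / (norm q)^3) *\<^sub>R q"

lemma sgn_in_S3: "q \<noteq> 0 \<Longrightarrow> sgn q \<in> S3"
  by (simp add: S3_norm norm_sgn)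

lemma has_derivative_sgn:
  assumes q: "(q::pt) \<noteq> 0"
  shows "(sgn has_derivative Dsgn q) (at q)"
proof -
  have n: "norm q \<noteq> 0" using q by simp
  have dn: "(norm has_derivative (\<lambda>h. h \<bullet> sgn q)) (at q)" using has_derivative_norm[OF q] .
  have di: "((\<lambda>x. inverse (norm x)) has_derivative
      (\<lambda>h. - (inverse (norm q) * (h \<bullet> sgn q) * inverse (norm q)))) (at q)"
    using Deriv.has_derivative_inverse[OF n dn] .
  have "((\<lambda>x. inverse (norm x) *\<^sub>R x) has_derivative
      (\<lambda>v. inverse (norm q) *\<^sub>R v + (- (inverse (norm q) * (v \<bullet> sgn q) * inverse (norm q))) *\<^sub>R q))
          (at q)"
    (is "(?g has_derivative ?D) _")
    using has_derivative_scaleR[OF di has_derivative_ident] .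
  moreover have "?D = Dsgn q"
    by (rule ext) (simp add: Dsgn_def sgn_div_norm inner_commute power3_eq_cube field_simps)
  moreover have "?g = sgn"
    by (rule ext) (simp add: sgn_div_norm field_simps)
  ultimately show ?thesis by metis
qed

lemma Dsgn_inner:
  assumes q: "(q::pt) \<noteq> 0" and x: "x \<bullet> q = 0"
  shows "x \<bullet> Dsgn q v = (x \<bullet> v) / norm q"
  using x by (simp add: Dsgn_def inner_diff_right field_simps)

lemma Dsgn_tangent:
  assumes q: "(q::pt) \<noteq> 0"
  shows "sgn q \<bullet> Dsgn q v = 0"
proof -
  have n: "norm q \<noteq> 0" using q by simp
  have qq: "q \<bullet> q = (norm q)\<^sup>2" by (simp add: power2_norm_eq_inner)
  show ?thesis using n
    by (simp add: Dsgn_def sgn_div_norm inner_diff_right qq inner_commute power3_eq_cube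
        power2_eq_square field_simps)
qed

lemma Dsgn_S3: "q \<in> S3 \<Longrightarrow> q \<bullet> t = 0 \<Longrightarrow> Dsgn q t = t"
  by (simp add: Dsgn_def S3_norm)

lemma e_sgn: "e1 (sgn q) = inverse (norm q) *\<^sub>R e1 q" "e2 (sgn q) = inverse (norm q) *\<^sub>R e2 q"
   "e3 (sgn q) = inverse (norm q) *\<^sub>R e3 q"
  by (simp_all add: sgn_div_norm e_scale divide_inverse_commute)

lemma has_derivative_radial:
  assumes q: "(q::pt) \<noteq> 0" and d: "differentiable_S3 g (sgn q)"
  shows "((\<lambda>x. g (sgn x)) has_derivative (\<lambda>u. DS3 g (sgn q) (Dsgn q u))) (at q)"
proof -
  have o: "open (- {0::pt})" by (simp add: open_Compl)
  have qU: "q \<in> - {0}" using q by simp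
  have s: "(sgn has_derivative Dsgn q) (at q within - {0})"
    using has_derivative_sgn[OF q] by (rule has_derivative_at_withinI)
  have sub: "sgn ` (- {0::pt}) \<subseteq> S3"
  proof (rule image_subsetI)
    fix x :: pt assume "x \<in> - {0}" then show "sgn x \<in> S3" using sgn_in_S3 by simp
  qed
  have g: "(g has_derivative DS3 g (sgn q)) (at (sgn q) within sgn ` (- {0}))"
    using has_derivative_subset[OF DS3_works[OF d] sub] .
  have "((g \<circ> sgn) has_derivative (DS3 g (sgn q) \<circ> Dsgn q)) (at q within - {0})"
    using diff_chain_within[OF s g] .
  then show ?thesis using at_within_open[OF qU o] by (simp add: o_def)
qed

definition invsq :: "pt \<Rightarrow> real" where "invsq q = inverse (q \<bullet> q)"

lemma invsq_norm: "invsq q = inverse ((norm q)\<^sup>2)"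
  by (simp add: invsq_def power2_norm_eq_inner)

definition Dinvsq :: "pt \<Rightarrow> pt \<Rightarrow> real" where
  "Dinvsq p v = - (inverse (p \<bullet> p) * (v \<bullet> p + p \<bullet> v) * inverse (p \<bullet> p))"

lemma has_derivative_invsq:
  assumes p: "(p::pt) \<noteq> 0"
  shows "(invsq has_derivative Dinvsq p) (at p)"
proof -
  have pp: "p \<bullet> p \<noteq> 0" using p by simp
  have "((\<lambda>x. x \<bullet> x) has_derivative (\<lambda>h. p \<bullet> h + h \<bullet> p)) (at p)"
    using has_derivative_inner[OF has_derivative_ident has_derivative_ident] .
  from Deriv.has_derivative_inverse[OF pp this] show ?thesis
    unfolding invsq_def[abs_def] Dinvsq_def by (simp add: add.commute)
qed

text \<open>
  The derivative of the radial extension \<open>q \<mapsto> f (sgn q)\<close> (\<open>has_derivative_radial_Drad\<close>),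
  written through the derivatives \<open>De1, De2, De3\<close> of \<open>f\<close> on \<open>S3\<close>: in this form it can be
  differentiated once more.
\<close>

definition Drad :: "(pt \<Rightarrow> complex) \<Rightarrow> pt \<Rightarrow> pt \<Rightarrow> complex" where
  "Drad f q u = of_real ((e1 q \<bullet> u) * invsq q) * De1 f (sgn q)
     + of_real ((e2 q \<bullet> u) * invsq q) * De2 f (sgn q)
     + of_real ((e3 q \<bullet> u) * invsq q) * De3 f (sgn q)"

lemma DS3_Dsgn:
  assumes q: "(q::pt) \<noteq> 0" and d: "differentiable_S3 f (sgn q)"
  shows "DS3 f (sgn q) (Dsgn q u) = Drad f q u"
proof -
  have n: "norm q \<noteq> 0" using q by simp
  have t: "sgn q \<bullet> Dsgn q u = 0" using Dsgn_tangent[OF q] .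
  have o: "e1 (sgn q) \<bullet> q = 0" "e2 (sgn q) \<bullet> q = 0" "e3 (sgn q) \<bullet> q = 0"
    by (simp_all add: e_sgn e_orth)
  have i: "e1 (sgn q) \<bullet> Dsgn q u = (e1 q \<bullet> u) * invsq q" "e2 (sgn q) \<bullet> Dsgn q u = (e2 q \<bullet> u) * invsq q"
      "e3 (sgn q) \<bullet> Dsgn q u = (e3 q \<bullet> u) * invsq q"
    by (simp only: Dsgn_inner[OF q o(1)] Dsgn_inner[OF q o(2)] Dsgn_inner[OF q o(3)];
        simp add: e_sgn invsq_norm power2_eq_square field_simps)+
  show ?thesis
    using DS3_tangent[OF sgn_in_S3[OF q] t d] by (simp add: i Drad_def)
qed

lemma has_derivative_radial_Drad:
  assumes q: "(q::pt) \<noteq> 0" and d: "differentiable_S3 f (sgn q)"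
  shows "((\<lambda>x. f (sgn x)) has_derivative Drad f q) (at q)"
  using has_derivative_radial[OF q d] DS3_Dsgn[OF q d] by (simp add: fun_eq_iff)

lemma Drad_S3:
  assumes q: "q \<in> S3" and t: "q \<bullet> t = 0" and d: "differentiable_S3 f q"
  shows "Drad f q t = DS3 f q t"
  using DS3_Dsgn[OF S3_nonzero[OF q], of f t] d Dsgn_S3[OF q t] sgn_S3_eq[OF q] by simp

lemma Drad_scale: "Drad f p (c *\<^sub>R x) = of_real c * Drad f p x"
  by (simp add: Drad_def algebra_simps)

lemma Drad_neg: "Drad f p (- x) = - Drad f p x"
  by (simp add: Drad_def algebra_simps)

lemma Drad_self:
  assumes p: "p \<in> S3"
  shows "Drad f p p = 0" "Drad f p (e1 p) = De1 f p"
proof -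
  have pp: "p \<bullet> p = 1" using p by (simp add: S3_norm power2_norm_eq_inner[symmetric])
  have "e1 p \<bullet> p = 0" "e2 p \<bullet> p = 0" "e3 p \<bullet> p = 0" by (simp_all add: e_orth)
  then show "Drad f p p = 0" by (simp add: Drad_def)
  show "Drad f p (e1 p) = De1 f p"
    using pp sgn_S3_eq[OF p] by (simp add: Drad_def e_orth invsq_def)
qed

definition Dradial :: "(pt \<Rightarrow> complex) \<Rightarrow> pt \<Rightarrow> pt \<Rightarrow> complex" where
  "Dradial g p v = DS3 g (sgn p) (Dsgn p v)"

definition D2rad :: "(pt \<Rightarrow> complex) \<Rightarrow> pt \<Rightarrow> pt \<Rightarrow> pt \<Rightarrow> complex" where
  "D2rad f p u v =
     of_real ((e1 v \<bullet> u) * invsq p + (e1 p \<bullet> u) * Dinvsq p v) * De1 f (sgn p)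
       + of_real ((e1 p \<bullet> u) * invsq p) * Dradial (De1 f) p v
   + of_real ((e2 v \<bullet> u) * invsq p + (e2 p \<bullet> u) * Dinvsq p v) * De2 f (sgn p)
       + of_real ((e2 p \<bullet> u) * invsq p) * Dradial (De2 f) p v
   + of_real ((e3 v \<bullet> u) * invsq p + (e3 p \<bullet> u) * Dinvsq p v) * De3 f (sgn p)
       + of_real ((e3 p \<bullet> u) * invsq p) * Dradial (De3 f) p v"

lemma has_derivative_Drad_term:
  assumes p: "(p::pt) \<noteq> 0" and d: "differentiable_S3 g (sgn p)" and e: "(e has_derivative e) (at p)"
    and r: "(r has_derivative r') (at p)"
  shows "((\<lambda>q. of_real ((e q \<bullet> r q) * invsq q) * g (sgn q)) has_derivative
     (\<lambda>v. of_real ((e v \<bullet> r p + e p \<bullet> r' v) * invsq p + (e p \<bullet> r p) * Dinvsq p v) * g (sgn p)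
          + of_real ((e p \<bullet> r p) * invsq p) * Dradial g p v)) (at p)"
proof -
  have c: "((\<lambda>q. (e q \<bullet> r q) * invsq q) has_derivative
      (\<lambda>v. (e p \<bullet> r p) * Dinvsq p v + (e p \<bullet> r' v + e v \<bullet> r p) * invsq p)) (at p)"
    using has_derivative_mult[OF has_derivative_inner[OF e r] has_derivative_invsq[OF p]] .
  have g: "((\<lambda>q. g (sgn q)) has_derivative Dradial g p) (at p)"
    using has_derivative_radial[OF p d] by (simp add: Dradial_def[abs_def])
  have "((\<lambda>q. of_real ((e q \<bullet> r q) * invsq q) * g (sgn q)) has_derivative
      (\<lambda>v. of_real ((e p \<bullet> r p) * invsq p) * Dradial g p v
          + of_real ((e p \<bullet> r p) * Dinvsq p v + (e p \<bullet> r' v + e v \<bullet> r p) * invsq p) * g (sgn p)))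
          (at p)"
    using has_derivative_mult[OF has_derivative_of_real[OF c] g] .
  then show ?thesis
    by (rule has_derivative_eq_rhs) (simp add: fun_eq_iff algebra_simps)
qed

lemma has_derivative_Drad:
  assumes p: "(p::pt) \<noteq> 0" and d1: "differentiable_S3 (De1 f) (sgn p)"
      and d2: "differentiable_S3 (De2 f) (sgn p)" and d3: "differentiable_S3 (De3 f) (sgn p)"
    and r: "(r has_derivative r') (at p)"
  shows "((\<lambda>q. Drad f q (r q)) has_derivative (\<lambda>v. D2rad f p (r p) v + Drad f p (r' v))) (at p)"
proof -
  have "((\<lambda>q. of_real ((e1 q \<bullet> r q) * invsq q) * De1 f (sgn q) + of_real ((e2 q \<bullet> r q) * invsq q)
      * De2 f (sgn q)
             + of_real ((e3 q \<bullet> r q) * invsq q) * De3 f (sgn q)) has_derivative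
      (\<lambda>v. (of_real ((e1 v \<bullet> r p + e1 p \<bullet> r' v) * invsq p + (e1 p \<bullet> r p) * Dinvsq p v) * De1 f (sgn p)
          + of_real ((e1 p \<bullet> r p) * invsq p) * Dradial (De1 f) p v)
         + (of_real ((e2 v \<bullet> r p + e2 p \<bullet> r' v) * invsq p + (e2 p \<bullet> r p) * Dinvsq p v) * De2 f (sgn p)
          + of_real ((e2 p \<bullet> r p) * invsq p) * Dradial (De2 f) p v)
         + (of_real ((e3 v \<bullet> r p + e3 p \<bullet> r' v) * invsq p + (e3 p \<bullet> r p) * Dinvsq p v) * De3 f (sgn p)
          + of_real ((e3 p \<bullet> r p) * invsq p) * Dradial (De3 f) p v))) (at p)"
    by (intro has_derivative_add has_derivative_Drad_term[OF p d1 e_deriv(1) r]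
        has_derivative_Drad_term[OF p d2 e_deriv(2) r]
        has_derivative_Drad_term[OF p d3 e_deriv(3) r])
  then show ?thesis
    unfolding Drad_def[abs_def]
    by (rule has_derivative_eq_rhs) (simp add: fun_eq_iff D2rad_def Drad_def algebra_simps)
qed

lemma has_derivative_Drad_const:
  assumes p: "(p::pt) \<noteq> 0" and d1: "differentiable_S3 (De1 f) (sgn p)"
      and d2: "differentiable_S3 (De2 f) (sgn p)" and d3: "differentiable_S3 (De3 f) (sgn p)"
  shows "((\<lambda>q. Drad f q u) has_derivative D2rad f p u) (at p)"
  using has_derivative_Drad[OF p d1 d2 d3 has_derivative_const[of u]] by (simp add: Drad_def)

lemma D2rad_sym:
  assumes p: "p \<in> S3" and df: "\<forall>m\<in>S3. differentiable_S3 f m"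
    and d1: "differentiable_S3 (De1 f) p" and d2: "differentiable_S3 (De2 f) p"
        and d3: "differentiable_S3 (De3 f) p"
  shows "D2rad f p u v = D2rad f p v u"
proof -
  have p0: "p \<noteq> 0" using S3_nonzero[OF p] .
  have sp: "sgn p = p" using sgn_S3_eq[OF p] .
  have dF: "((\<lambda>x. f (sgn x)) has_derivative Drad f q) (at q)" if "q \<in> - {0}" for q
    using has_derivative_radial_Drad[of q f] that df sgn_in_S3[of q] by auto
  show ?thesis
    using second_derivative_symmetric[of "- {0}" p "\<lambda>x. f (sgn x)" "Drad f" u "D2rad f p u" v
        "D2rad f p v"] dF p0
      has_derivative_Drad_const[OF p0, of f u] has_derivative_Drad_const[OF p0, of f v] d1 d2 d3 sp
    by (simp add: open_Compl)
qed

lemma D2rad_scale: "D2rad f p (c *\<^sub>R x) v = of_real c * D2rad f p x v"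
  by (simp add: D2rad_def algebra_simps)

lemma D2rad_neg: "D2rad f p (- x) v = - D2rad f p x v"
  by (simp add: D2rad_def algebra_simps)

lemma cder_cder_D2rad:
  assumes p: "p \<in> S3" and df: "\<forall>m\<in>S3. differentiable_S3 f m"
    and d1: "differentiable_S3 (De1 f) p" and d2: "differentiable_S3 (De2 f) p"
        and d3: "differentiable_S3 (De3 f) p"
    and rX: "bounded_linear rX" and iX: "bounded_linear iX"
    and X1: "\<And>q. re_vec (X q) = rX q" and X2: "\<And>q. im_vec (X q) = iX q"
    and t1: "\<And>q. q \<bullet> rX q = 0" and t2: "\<And>q. q \<bullet> iX q = 0"
    and tY: "tangent p (Y p)"
  shows "cder Y (cder X f) p
     = cvec_apply (\<lambda>v. D2rad f p (rX p) v + Drad f p (rX v) + \<i>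
         * (D2rad f p (iX p) v + Drad f p (iX v))) (Y p)"
proof -
  have p0: "p \<noteq> 0" using S3_nonzero[OF p] .
  have sp: "sgn p = p" using sgn_S3_eq[OF p] .
  have loc: "cder X f q = Drad f q (rX q) + \<i> * Drad f q (iX q)" if q: "q \<in> S3" for q
    using df q
    by (simp add: cder_def Let_def X1 X2 DS3_def[symmetric] Drad_S3[OF q t1] Drad_S3[OF q t2])
  have dK: "((\<lambda>q. Drad f q (rX q) + \<i> * Drad f q (iX q)) has_derivative
      (\<lambda>v. D2rad f p (rX p) v + Drad f p (rX v) + \<i> * (D2rad f p (iX p) v + Drad f p (iX v)))) (at p)"
    using has_derivative_add[OF has_derivative_Drad[OF p0, of f rX rX]
        has_derivative_mult_right[OF has_derivative_Drad[OF p0, of f iX iX]]]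
      d1 d2 d3 sp bounded_linear_imp_has_derivative[OF rX] bounded_linear_imp_has_derivative[OF iX]
    by simp
  have "cder Y (cder X f) p = cder Y (\<lambda>q. Drad f q (rX q) + \<i> * Drad f q (iX q)) p"
    using cder_S3_cong[OF p loc] by simp
  also have "\<dots> = cvec_apply (\<lambda>v. D2rad f p (rX p) v + Drad f p (rX v) + \<i>
      * (D2rad f p (iX p) v + Drad f p (iX v))) (Y p)"
    using cder_has_derivative[of p Y, OF p tY has_derivative_at_withinI[OF dK]] .
  finally show ?thesis .
qed

text \<open>
  Both iterated derivatives are values of \<open>D2rad\<close>. By symmetry of \<open>D2rad\<close> the second-order parts
  cancel; what remains comes from differentiating the frame vectors themselves (\<open>e_compose\<close>),
  and yields \<open>e1 = Re T\<close>.
\<close>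

theorem Zf1_Zf1b_commutator:
  assumes p: "p \<in> S3" and df: "\<forall>m\<in>S3. differentiable_S3 f m"
    and dT: "differentiable_S3 (cder Tf f) p"
    and dZ: "differentiable_S3 (cder Zf1 f) p" and dZb: "differentiable_S3 (cder Zf1b f) p"
  shows "cder Zf1 (cder Zf1b f) p - cder Zf1b (cder Zf1 f) p = - \<i> * cder Tf f p"
proof -
  have d1: "differentiable_S3 (De1 f) p" using dT by (simp add: De1_def[abs_def])
  have d2: "differentiable_S3 (De2 f) p" using dZ dZb by (simp add: De2_def[abs_def])
  have d3: "differentiable_S3 (De3 f) p" using dZ dZb by (simp add: De3_def[abs_def])
  have p0: "p \<noteq> 0" using S3_nonzero[OF p] .
  have sp: "sgn p = p" using sgn_S3_eq[OF p] .
  have linH: "linear (D2rad f p u)" for u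
    using has_derivative_Drad_const[OF p0, of f u] d1 d2 d3 sp by (simp add: has_derivative_linear)
  have D2rad_lin: "D2rad f p u (c *\<^sub>R v) = of_real c * D2rad f p u v"
    "D2rad f p u (- v) = - D2rad f p u v" for u v c
    using linear_scale[OF linH[of u], of c v] linear_neg[OF linH[of u], of v]
    by (simp_all add: scaleR_conv_of_real)
  have tq: "q \<bullet> (c *\<^sub>R e2 q) = 0" "q \<bullet> (c *\<^sub>R e3 q) = 0" for q :: pt and c
    by (simp_all add: inner_commute[of q] e_orth)
  have tq2: "q \<bullet> e2 q = 0" "q \<bullet> e3 q = 0" for q :: pt
    by (simp_all add: inner_commute[of q] e_orth)
  have A: "cder Zf1 (cder Zf1b f) p = cvec_apply
      (\<lambda>v. D2rad f p ((1/2) *\<^sub>R e2 p) v + Drad f p ((1/2) *\<^sub>R e2 v)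
      + \<i> * (D2rad f p ((1/2) *\<^sub>R e3 p) v + Drad f p ((1/2) *\<^sub>R e3 v))) (Zf1 p)"
    by (rule cder_cder_D2rad[of p f "\<lambda>q. (1/2) *\<^sub>R e2 q" "\<lambda>q. (1/2) *\<^sub>R e3 q" Zf1b Zf1])
       (simp_all add: p df d1 d2 d3 bounded_linear_const_scaleR e_bounded_linear re_Zf1b im_Zf1b tq tq2
           tangent_Zf1)
  have B: "cder Zf1b (cder Zf1 f) p = cvec_apply
      (\<lambda>v. D2rad f p ((1/2) *\<^sub>R e2 p) v + Drad f p ((1/2) *\<^sub>R e2 v)
      + \<i> * (D2rad f p ((-1/2) *\<^sub>R e3 p) v + Drad f p ((-1/2) *\<^sub>R e3 v))) (Zf1b p)"
    by (rule cder_cder_D2rad[of p f "\<lambda>q. (1/2) *\<^sub>R e2 q" "\<lambda>q. (-1/2) *\<^sub>R e3 q" Zf1 Zf1b])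
       (simp_all add: p df d1 d2 d3 bounded_linear_const_scaleR e_bounded_linear re_Zf1 im_Zf1 tq tq2
           tangent_Zf1b bounded_linear_minus del: scaleR_minus_left)
  have sym: "D2rad f p (e3 p) (e2 p) = D2rad f p (e2 p) (e3 p)"
    using D2rad_sym[OF p df d1 d2 d3] .
  have De1_Tf: "De1 f p = cder Tf f p" by (simp add: De1_def)
  show ?thesis
    unfolding A B cvec_apply_def re_Zf1 im_Zf1 re_Zf1b im_Zf1b
    by (simp add: e_scale e_neg e_compose Drad_scale Drad_neg D2rad_scale D2rad_neg D2rad_lin Drad_self[OF p]
        sym De1_Tf algebra_simps)
qed

section \<open>Jets of the deformation tensor\<close>

definition jet_base :: "(pt \<Rightarrow> complex) \<Rightarrow> bool \<Rightarrow> pt \<Rightarrow> complex" where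
  "jet_base \<phi> b = (if b then (\<lambda>q. cnj (\<phi> q)) else \<phi>)"

definition Zsel :: "bool \<Rightarrow> cvf" where "Zsel d = (if d then Zf1b else Zf1)"

lemma jet_Zsel: "jet \<phi> (b, ds) = iterd (map Zsel ds) (jet_base \<phi> b)"
  by (simp add: jet_def Zsel_def[abs_def] jet_base_def)

definition std_fields :: "cvf set" where "std_fields = {Tf, Zf1, Zf1b}"

lemma iterd_append: "iterd (Xs @ Ys) f = iterd Xs (iterd Ys f)"
  by (induction Xs) auto

lemma smoothS3_iterd:
  assumes "smoothS3 g" "set Xs \<subseteq> std_fields" shows "smoothS3 (iterd Xs g)"
  using assms unfolding smoothS3_def std_fields_def
  by (metis iterd_append set_append Un_subset_iff)

lemma smoothS3_differentiable: "smoothS3 g \<Longrightarrow> p \<in> S3 \<Longrightarrow> differentiable_S3 g p"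
  unfolding smoothS3_def by (metis empty_subsetI empty_set iterd.simps(1))

lemma tangent_std_fields: "X \<in> std_fields \<Longrightarrow> tangent p (X p)"
  by (auto simp: std_fields_def tangent_Tf tangent_Zf1 tangent_Zf1b)

lemma qconj_Tf: "qconj (Tf q) = Tf q"
  by (cases q) (simp add: Tf_def qconj_def)

lemma qconj_Zf1: "qconj (Zf1 q) = Zf1b q"
  by (cases q) (simp add: Zf1_def Zf1b_def qconj_def)

lemma qconj_Zf1b: "qconj (Zf1b q) = Zf1 q"
  by (cases q) (simp add: Zf1_def Zf1b_def qconj_def)

lemma std_fields_qconj: "X \<in> std_fields \<Longrightarrow> \<exists>Y\<in>std_fields. \<forall>q. Y q = qconj (X q)"
  unfolding std_fields_def using qconj_Tf qconj_Zf1 qconj_Zf1b by auto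

lemma iterd_cnj:
  assumes g: "smoothS3 g"
  shows "set Xs \<subseteq> std_fields \<Longrightarrow> \<exists>Ys. set Ys \<subseteq> std_fields
      \<and> (\<forall>q\<in>S3. iterd Xs (\<lambda>q. cnj (g q)) q = cnj (iterd Ys g q))"
proof (induction Xs)
  case Nil
  then show ?case by (intro exI[of _ "[]"]) simp
next
  case (Cons X Xs)
  then obtain Ys where Ys: "set Ys \<subseteq> std_fields" "\<forall>q\<in>S3. iterd Xs (\<lambda>q. cnj (g q)) q
      = cnj (iterd Ys g q)"
    by auto
  have XW: "X \<in> std_fields" using Cons.prems by simp
  obtain Y where Y: "Y \<in> std_fields" "\<And>q. Y q = qconj (X q)" using std_fields_qconj[OF XW] by blast
  have sm: "smoothS3 (iterd Ys g)" using smoothS3_iterd[OF g Ys(1)] .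
  have "iterd (X # Xs) (\<lambda>q. cnj (g q)) q = cnj (iterd (Y # Ys) g q)" if q: "q \<in> S3" for q
  proof -
    have "iterd (X # Xs) (\<lambda>q. cnj (g q)) q = cder X (\<lambda>q. cnj (iterd Ys g q)) q"
      using cder_S3_cong[OF q Ys(2)[rule_format]] by simp
    also have "\<dots> = cnj (cder Y (iterd Ys g) q)"
      by (rule cder_cnj[of q X "iterd Ys g" Y,
          OF q tangent_std_fields[OF XW, of q] smoothS3_differentiable[OF sm q] Y(2)[of q]])
    finally show ?thesis by simp
  qed
  then show ?case using Ys(1) Y(1) by (intro exI[of _ "Y # Ys"]) auto
qed

lemma smoothS3_cnj:
  assumes g: "smoothS3 g" shows "smoothS3 (\<lambda>q. cnj (g q))"
  unfolding smoothS3_def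
proof (intro allI impI ballI)
  fix Xs p assume Xs: "set Xs \<subseteq> {Tf, Zf1, Zf1b}" and p: "p \<in> S3"
  obtain Ys where Ys: "set Ys \<subseteq> std_fields" "\<forall>q\<in>S3. iterd Xs (\<lambda>q. cnj (g q)) q = cnj (iterd Ys g q)"
    using iterd_cnj[OF g, of Xs] Xs by (auto simp: std_fields_def)
  have "iterd Ys g differentiable (at p within S3)"
    using g Ys(1) p by (auto simp: smoothS3_def std_fields_def)
  then have "(\<lambda>q. cnj (iterd Ys g q)) differentiable (at p within S3)"
    by (simp add: differentiable_cnj_iff)
  then show "iterd Xs (\<lambda>q. cnj (g q)) differentiable (at p within S3)"
    using differentiable_S3_cong[OF p Ys(2)[rule_format]] by simp
qed

lemma smoothS3_jet_base: "smoothS3 \<phi> \<Longrightarrow> smoothS3 (jet_base \<phi> b)"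
  by (simp add: jet_base_def smoothS3_cnj)

lemma Zsel_std_fields: "set (map Zsel ds) \<subseteq> std_fields"
  by (auto simp: Zsel_def std_fields_def)

lemma smoothS3_jet: "smoothS3 \<phi> \<Longrightarrow> smoothS3 (jet \<phi> v)"
  by (cases v) (simp add: jet_Zsel smoothS3_iterd[OF smoothS3_jet_base Zsel_std_fields])

lemma cder_Zsel_jet: "cder (Zsel d) (jet \<phi> (b, ds)) = jet \<phi> (b, d # ds)"
  by (simp add: jet_Zsel)

lemma qconj_Zsel: "qconj (Zsel d q) = Zsel (\<not> d) q"
  by (simp add: Zsel_def qconj_Zf1 qconj_Zf1b)

lemma tangent_Zsel: "tangent p (Zsel d p)"
  by (simp add: Zsel_def tangent_Zf1 tangent_Zf1b)

lemma jet_True_cnj: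
  assumes sm: "smoothS3 \<phi>"
  shows "\<forall>q\<in>S3. jet \<phi> (True, ds) q = cnj (jet \<phi> (False, map Not ds) q)"
proof (induction ds)
  case Nil
  then show ?case by (simp add: jet_def)
next
  case (Cons d ds)
  show ?case
  proof
    fix q assume q: "q \<in> S3"
    have "jet \<phi> (True, d # ds) q = cder (Zsel d) (jet \<phi> (True, ds)) q"
      by (simp add: cder_Zsel_jet)
    also have "\<dots> = cder (Zsel d) (\<lambda>q. cnj (jet \<phi> (False, map Not ds) q)) q"
      using cder_S3_cong[OF q Cons.IH[rule_format]] by simp
    also have "\<dots> = cnj (cder (Zsel (\<not> d)) (jet \<phi> (False, map Not ds)) q)"
      by (rule cder_cnj[of q "Zsel d", OF q tangent_Zsel smoothS3_differentiable[OF smoothS3_jet[OF sm] q]])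
         (simp add: qconj_Zsel)
    also have "\<dots> = cnj (jet \<phi> (False, map Not (d # ds)) q)"
      by (simp add: cder_Zsel_jet)
    finally show "jet \<phi> (True, d # ds) q = cnj (jet \<phi> (False, map Not (d # ds)) q)" .
  qed
qed

lemma jet_cnj:
  assumes sm: "smoothS3 \<phi>" and q: "q \<in> S3"
  shows "cnj (jet \<phi> (b, ds) q) = jet \<phi> (\<not> b, map Not ds) q"
proof (cases b)
  case True
  then show ?thesis using jet_True_cnj[OF sm] q by simp
next
  case False
  then show ?thesis using jet_True_cnj[OF sm, of "map Not ds"] q by (simp add: comp_def)
qed

lemma cder_Tf_jet:
  assumes sm: "smoothS3 \<phi>" and p: "p \<in> S3"
  shows "cder Tf (jet \<phi> (b, ds)) p = \<i> * (jet \<phi> (b, False # True # ds) p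
      - jet \<phi> (b, True # False # ds) p)"
proof -
  let ?f = "jet \<phi> (b, ds)"
  have sf: "smoothS3 ?f" using smoothS3_jet[OF sm] .
  have s1: "smoothS3 (iterd [X] ?f)" if "X \<in> std_fields" for X
    using smoothS3_iterd[OF sf, of "[X]"] that by simp
  have c: "cder Zf1 (cder Zf1b ?f) p - cder Zf1b (cder Zf1 ?f) p = - \<i> * cder Tf ?f p"
    by (rule Zf1_Zf1b_commutator[OF p])
       (use smoothS3_differentiable[OF sf] smoothS3_differentiable[OF s1[of Tf]]
           smoothS3_differentiable[OF s1[of Zf1]] smoothS3_differentiable[OF s1[of Zf1b]] p
        in \<open>auto simp: std_fields_def\<close>)
  have "jet \<phi> (b, False # True # ds) = cder Zf1 (cder Zf1b ?f)"
    "jet \<phi> (b, True # False # ds) = cder Zf1b (cder Zf1 ?f)"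
    by (simp_all add: jet_Zsel Zsel_def)
  moreover have "\<i> * (cder Zf1 (cder Zf1b ?f) p - cder Zf1b (cder Zf1 ?f) p) = cder Tf ?f p"
    unfolding c by (simp flip: mult.assoc)
  ultimately show ?thesis by simp
qed

section \<open>Polynomials in the jets\<close>

definition monval :: "(pt \<Rightarrow> complex) \<Rightarrow> jetvar list \<Rightarrow> pt \<Rightarrow> complex" where
  "monval \<phi> xs q = (\<Prod>v\<leftarrow>xs. jet \<phi> v q)"

lemma monval_Nil: "monval \<phi> [] = (\<lambda>q. 1)" by (simp add: monval_def[abs_def])

lemma monval_Cons: "monval \<phi> (v # vs) = (\<lambda>q. jet \<phi> v q * monval \<phi> vs q)"
    by (simp add: monval_def[abs_def])

lemma monval_Cons': "monval \<phi> (v # vs) q = jet \<phi> v q * monval \<phi> vs q" by (simp add: monval_def)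

lemma monval_append: "monval \<phi> (xs @ ys) q = monval \<phi> xs q * monval \<phi> ys q" by (simp add: monval_def)

lemma polyval_monval: "polyval P \<phi> p = (\<Sum>m\<leftarrow>P. fst m * monval \<phi> (snd m) p)"
  by (simp add: polyval_def monval_def)

lemma polyval_Nil: "polyval [] \<phi> = (\<lambda>q. 0)" by (simp add: polyval_def[abs_def])

lemma polyval_Cons: "polyval (m # P) \<phi> = (\<lambda>q. fst m * monval \<phi> (snd m) q + polyval P \<phi> q)"
  by (simp add: polyval_monval[abs_def])

lemma polyval_append: "polyval (P @ Q) \<phi> p = polyval P \<phi> p + polyval Q \<phi> p"
  by (simp add: polyval_monval)

definition poly_mult :: "jetpoly \<Rightarrow> jetpoly \<Rightarrow> jetpoly" where
  "poly_mult P Q = concat (map (\<lambda>m. map (\<lambda>n. (fst m * fst n, snd m @ snd n)) Q) P)"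

lemma polyval_poly_mult: "polyval (poly_mult P Q) \<phi> p = polyval P \<phi> p * polyval Q \<phi> p"
proof (induction P)
  case Nil then show ?case by (simp add: poly_mult_def polyval_monval)
next
  case (Cons m P)
  have "polyval (map (\<lambda>n. (fst m * fst n, snd m @ snd n)) Q) \<phi> p = fst m * monval \<phi> (snd m) p
      * polyval Q \<phi> p"
    by (induction Q) (simp_all add: polyval_monval monval_append algebra_simps)
  then show ?case using Cons by (simp add: poly_mult_def polyval_append[symmetric] polyval_monval
      algebra_simps)
qed

definition poly_smult :: "complex \<Rightarrow> jetpoly \<Rightarrow> jetpoly" where
  "poly_smult c P = map (\<lambda>m. (c * fst m, snd m)) P"

lemma polyval_poly_smult: "polyval (poly_smult c P) \<phi> p = c * polyval P \<phi> p"
  by (induction P) (simp_all add: poly_smult_def polyval_monval algebra_simps)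

definition poly_const :: "complex \<Rightarrow> jetpoly" where "poly_const c = [(c, [])]"

lemma polyval_poly_const: "polyval (poly_const c) \<phi> p = c"
  by (simp add: poly_const_def polyval_monval monval_def)

definition poly_ht :: jetpoly where "poly_ht = [(1, []), (-1, [(False, []), (True, [])])]"

lemma cnorm_sq: "(complex_of_real (cmod z))\<^sup>2 = z * cnj z"
  by (metis complex_norm_square of_real_power)

lemma ht_polyval: "ht \<phi> p = polyval poly_ht \<phi> p"
  by (simp add: poly_ht_def polyval_monval monval_def ht_def jet_def cnorm_sq)

lemma ht_fun: "ht \<phi> = polyval poly_ht \<phi>" by (simp add: fun_eq_iff ht_polyval)

definition jetvar_cnj :: "jetvar \<Rightarrow> jetvar" where "jetvar_cnj v = (\<not> fst v, map Not (snd v))"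

definition poly_cnj :: "jetpoly \<Rightarrow> jetpoly" where
  "poly_cnj P = map (\<lambda>m. (cnj (fst m), map jetvar_cnj (snd m))) P"

lemma monval_cnj:
  assumes sm: "smoothS3 \<phi>" and q: "q \<in> S3"
  shows "cnj (monval \<phi> xs q) = monval \<phi> (map jetvar_cnj xs) q"
  by (induction xs) (auto simp: monval_def jetvar_cnj_def jet_cnj[OF sm q, symmetric] intro:
      jet_cnj[OF sm q])

lemma polyval_poly_cnj:
  assumes sm: "smoothS3 \<phi>" and q: "q \<in> S3"
  shows "cnj (polyval P \<phi> q) = polyval (poly_cnj P) \<phi> q"
  by (induction P) (simp_all add: polyval_monval poly_cnj_def monval_cnj[OF sm q, symmetric])

fun mon_deriv :: "bool \<Rightarrow> jetvar list \<Rightarrow> jetvar list list" where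
  "mon_deriv d [] = []"
| "mon_deriv d (v # vs) = ((fst v, d # snd v) # vs) # map ((#) v) (mon_deriv d vs)"

definition poly_deriv :: "bool \<Rightarrow> jetpoly \<Rightarrow> jetpoly" where
  "poly_deriv d P = concat (map (\<lambda>m. map (\<lambda>ys. (fst m, ys)) (mon_deriv d (snd m))) P)"

fun mon_derivT :: "jetvar list \<Rightarrow> (complex \<times> jetvar list) list" where
  "mon_derivT [] = []"
| "mon_derivT (v # vs) = [(\<i>, (fst v, False # True # snd v) # vs),
    (- \<i>, (fst v, True # False # snd v) # vs)]
     @ map (\<lambda>c. (fst c, v # snd c)) (mon_derivT vs)"

definition poly_derivT :: "jetpoly \<Rightarrow> jetpoly" where
  "poly_derivT P = concat (map (\<lambda>m. map (\<lambda>c. (fst m * fst c, snd c)) (mon_derivT (snd m))) P)"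

lemma differentiable_monval:
  assumes sm: "smoothS3 \<phi>" and p: "p \<in> S3"
  shows "differentiable_S3 (monval \<phi> xs) p"
proof (induction xs)
  case Nil then show ?case by (simp add: monval_Nil)
next
  case (Cons v vs)
  then show ?case using smoothS3_differentiable[OF smoothS3_jet[OF sm] p, of v]
    by (simp add: monval_Cons)
qed

lemma differentiable_polyval:
  assumes sm: "smoothS3 \<phi>" and p: "p \<in> S3"
  shows "differentiable_S3 (polyval P \<phi>) p"
proof (induction P)
  case Nil then show ?case by (simp add: polyval_Nil)
next
  case (Cons m P)
  then show ?case using differentiable_monval[OF sm p, of "snd m"] by (simp add: polyval_Cons)
qed

lemma cder_Zsel_const: "p \<in> S3 \<Longrightarrow> cder (Zsel d) (\<lambda>q. c) p = 0"
  using cder_const[of p "Zsel d" c] tangent_Zsel by simp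

lemma cder_Tf_const: "p \<in> S3 \<Longrightarrow> cder Tf (\<lambda>q. c) p = 0"
  using cder_const[of p Tf c] tangent_Tf by simp

lemma cder_Zsel_monval:
  assumes sm: "smoothS3 \<phi>" and p: "p \<in> S3"
  shows "cder (Zsel d) (monval \<phi> xs) p = (\<Sum>ys\<leftarrow>mon_deriv d xs. monval \<phi> ys p)"
proof (induction xs)
  case Nil
  then show ?case by (simp add: monval_Nil cder_Zsel_const[OF p])
next
  case (Cons v vs)
  obtain b ds where v: "v = (b, ds)" by (cases v)
  have "cder (Zsel d) (monval \<phi> (v # vs)) p = jet \<phi> v p * cder (Zsel d) (monval \<phi> vs) p + monval \<phi> vs p
      * cder (Zsel d) (jet \<phi> v) p"
    unfolding monval_Cons
    by (rule cder_mult[of p "Zsel d", OF p tangent_Zsel smoothS3_differentiable[OF smoothS3_jet[OF sm]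
        p] differentiable_monval[OF sm p]])
  also have "\<dots> = (\<Sum>ys\<leftarrow>mon_deriv d (v # vs). monval \<phi> ys p)"
    using Cons by (simp add: v cder_Zsel_jet monval_Cons' sum_list_const_mult[symmetric] o_def
        algebra_simps)
  finally show ?case .
qed

lemma cder_Tf_monval:
  assumes sm: "smoothS3 \<phi>" and p: "p \<in> S3"
  shows "cder Tf (monval \<phi> xs) p = (\<Sum>c\<leftarrow>mon_derivT xs. fst c * monval \<phi> (snd c) p)"
proof (induction xs)
  case Nil
  then show ?case by (simp add: monval_Nil cder_Tf_const[OF p])
next
  case (Cons v vs)
  obtain b ds where v: "v = (b, ds)" by (cases v)
  have "cder Tf (monval \<phi> (v # vs)) p = jet \<phi> v p * cder Tf (monval \<phi> vs) p + monval \<phi> vs p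
      * cder Tf (jet \<phi> v) p"
    unfolding monval_Cons
    by (rule cder_mult[of p Tf, OF p tangent_Tf smoothS3_differentiable[OF smoothS3_jet[OF sm] p]
        differentiable_monval[OF sm p]])
  also have "\<dots> = (\<Sum>c\<leftarrow>mon_derivT (v # vs). fst c * monval \<phi> (snd c) p)"
    using Cons by (simp add: v cder_Tf_jet[OF sm p] monval_Cons' sum_list_const_mult[symmetric] o_def
        algebra_simps)
  finally show ?case .
qed

lemma cder_Zsel_polyval:
  assumes sm: "smoothS3 \<phi>" and p: "p \<in> S3"
  shows "cder (Zsel d) (polyval P \<phi>) p = polyval (poly_deriv d P) \<phi> p"
proof (induction P)
  case Nil
  then show ?case by (simp add: polyval_Nil poly_deriv_def polyval_monval cder_Zsel_const[OF p])
next
  case (Cons m P)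
  have "cder (Zsel d) (polyval (m # P) \<phi>) p
      = cder (Zsel d) (\<lambda>q. fst m * monval \<phi> (snd m) q) p + cder (Zsel d) (polyval P \<phi>) p"
    unfolding polyval_Cons
    by (rule cder_add[of p "Zsel d", OF p tangent_Zsel])
        (use differentiable_monval[OF sm p] differentiable_polyval[OF sm p] in auto)
  also have "cder (Zsel d) (\<lambda>q. fst m * monval \<phi> (snd m) q) p = fst m
      * cder (Zsel d) (monval \<phi> (snd m)) p"
    using cder_mult[of p "Zsel d", OF p tangent_Zsel differentiable_const differentiable_monval[OF sm
        p], of "fst m" "snd m"]
      cder_Zsel_const[OF p] by simp
  finally show ?case
    using Cons by (simp add: cder_Zsel_monval[OF sm p] poly_deriv_def polyval_append polyval_monval
        sum_list_const_mult[symmetric] o_def)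
qed

lemma cder_Tf_polyval:
  assumes sm: "smoothS3 \<phi>" and p: "p \<in> S3"
  shows "cder Tf (polyval P \<phi>) p = polyval (poly_derivT P) \<phi> p"
proof (induction P)
  case Nil then show ?case by (simp add: polyval_Nil poly_derivT_def polyval_monval cder_Tf_const[OF p])
next
  case (Cons m P)
  have "cder Tf (polyval (m # P) \<phi>) p
      = cder Tf (\<lambda>q. fst m * monval \<phi> (snd m) q) p + cder Tf (polyval P \<phi>) p"
    unfolding polyval_Cons
    by (rule cder_add[of p Tf, OF p tangent_Tf])
        (use differentiable_monval[OF sm p] differentiable_polyval[OF sm p] in auto)
  also have "cder Tf (\<lambda>q. fst m * monval \<phi> (snd m) q) p = fst m * cder Tf (monval \<phi> (snd m)) p"
    using cder_mult[of p Tf, OF p tangent_Tf differentiable_const differentiable_monval[OF sm p], of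
        "fst m" "snd m"]
      cder_Tf_const[OF p] by simp
  finally show ?case
    using Cons by (simp add: cder_Tf_monval[OF sm p] poly_derivT_def polyval_append polyval_monval
        sum_list_const_mult[symmetric] o_def mult.assoc)
qed

lemma mon_order_append: "mon_order (xs @ ys) = mon_order xs + mon_order ys"
  by (simp add: mon_order_def)

lemma mon_order_Cons: "mon_order (v # vs) = length (snd v) + mon_order vs"
  by (simp add: mon_order_def)

lemma mon_order_mon_deriv: "ys \<in> set (mon_deriv d xs) \<Longrightarrow> mon_order ys = mon_order xs + 1"
  by (induction xs arbitrary: ys) (auto simp: mon_order_Cons)

lemma mon_order_mon_derivT: "c \<in> set (mon_derivT xs) \<Longrightarrow> mon_order (snd c) = mon_order xs + 2"
  by (induction xs arbitrary: c) (auto simp: mon_order_Cons)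

lemma mon_order_jetvar_cnj: "mon_order (map jetvar_cnj xs) = mon_order xs"
  by (induction xs) (auto simp: mon_order_Cons jetvar_cnj_def)

definition poly_order_le :: "nat \<Rightarrow> jetpoly \<Rightarrow> bool" where
  "poly_order_le n P \<longleftrightarrow> (\<forall>m\<in>set P. mon_order (snd m) \<le> n)"

lemma poly_order_le_append: "poly_order_le n P \<Longrightarrow> poly_order_le n Q \<Longrightarrow> poly_order_le n (P @ Q)"
  by (auto simp: poly_order_le_def)

lemma poly_order_le_mono: "poly_order_le n P \<Longrightarrow> n \<le> n' \<Longrightarrow> poly_order_le n' P"
  by (auto simp: poly_order_le_def)

lemma poly_order_le_poly_mult: "poly_order_le n P \<Longrightarrow> poly_order_le n' Q
    \<Longrightarrow> poly_order_le (n + n') (poly_mult P Q)"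
  by (fastforce simp: poly_order_le_def poly_mult_def mon_order_append intro: add_mono)

lemma poly_order_le_poly_smult: "poly_order_le n P \<Longrightarrow> poly_order_le n (poly_smult c P)"
  by (auto simp: poly_order_le_def poly_smult_def)

lemma poly_order_le_poly_cnj: "poly_order_le n P \<Longrightarrow> poly_order_le n (poly_cnj P)"
  by (auto simp: poly_order_le_def poly_cnj_def mon_order_jetvar_cnj)

lemma poly_order_le_poly_deriv: "poly_order_le n P \<Longrightarrow> poly_order_le (n + 1) (poly_deriv d P)"
  by (auto simp: poly_order_le_def poly_deriv_def mon_order_mon_deriv)

lemma poly_order_le_poly_derivT: "poly_order_le n P \<Longrightarrow> poly_order_le (n + 2) (poly_derivT P)"
  by (auto simp: poly_order_le_def poly_derivT_def mon_order_mon_derivT)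

lemma poly_order_le_poly_ht: "poly_order_le 0 poly_ht"
  by (simp add: poly_order_le_def poly_ht_def mon_order_def)

lemma poly_order_le_poly_const: "poly_order_le 0 (poly_const c)"
  by (simp add: poly_order_le_def poly_const_def mon_order_def)

section \<open>Jet polynomials divided by powers of the Levi form\<close>

definition admissible :: "(pt \<Rightarrow> complex) \<Rightarrow> bool" where
  "admissible \<phi> \<longleftrightarrow> smoothS3 \<phi> \<and> (\<forall>p\<in>S3. cmod (\<phi> p) < 1)"

lemma admissible_smooth: "admissible \<phi> \<Longrightarrow> smoothS3 \<phi>" by (simp add: admissible_def)

lemma ht_nonzero: "admissible \<phi> \<Longrightarrow> p \<in> S3 \<Longrightarrow> ht \<phi> p \<noteq> 0"
proof -
  assume g: "admissible \<phi>" and p: "p \<in> S3"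
  have "cmod (\<phi> p) < 1" using g p by (simp add: admissible_def)
  then have "(cmod (\<phi> p))\<^sup>2 < 1" by (simp add: power_less_one_iff abs_less_iff)
  then have "1 - (cmod (\<phi> p))\<^sup>2 \<noteq> 0" by linarith
  then show "ht \<phi> p \<noteq> 0" by (simp only: ht_def of_real_eq_0_iff) simp
qed

lemma cnj_ht: "cnj (ht \<phi> p) = ht \<phi> p" by (simp add: ht_def)

definition jet_quot :: "nat \<Rightarrow> nat \<Rightarrow> ((pt \<Rightarrow> complex) \<Rightarrow> pt \<Rightarrow> complex) \<Rightarrow> bool" where
  "jet_quot n k F \<longleftrightarrow> (\<exists>P. poly_order_le n P \<and>
     (\<forall>\<phi>. admissible \<phi> \<longrightarrow> (\<forall>p\<in>S3. F \<phi> p = polyval P \<phi> p / ht \<phi> p ^ k)))"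

lemma jet_quotI:
  assumes "poly_order_le n P"
    and "\<And>\<phi> p. admissible \<phi> \<Longrightarrow> p \<in> S3 \<Longrightarrow> F \<phi> p = polyval P \<phi> p / ht \<phi> p ^ k"
  shows "jet_quot n k F"
  using assms unfolding jet_quot_def by blast

lemma jet_quotE:
  assumes "jet_quot n k F"
  obtains P where "poly_order_le n P"
    and "\<And>\<phi> p. admissible \<phi> \<Longrightarrow> p \<in> S3 \<Longrightarrow> F \<phi> p = polyval P \<phi> p / ht \<phi> p ^ k"
  using assms unfolding jet_quot_def by blast

lemma jet_quot_cong:
  assumes "jet_quot n k F" and "\<And>\<phi> p. admissible \<phi> \<Longrightarrow> p \<in> S3 \<Longrightarrow> G \<phi> p = F \<phi> p"
  shows "jet_quot n k G"
  using assms by (auto elim!: jet_quotE intro!: jet_quotI)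

lemma jet_quot_mono_order: "jet_quot n k F \<Longrightarrow> n \<le> n' \<Longrightarrow> jet_quot n' k F"
  by (auto elim!: jet_quotE intro!: jet_quotI intro: poly_order_le_mono)

lemma jet_quot_Suc_power:
  assumes "jet_quot n k F"
  shows "jet_quot n (Suc k) F"
  using assms
proof (rule jet_quotE)
  fix P assume "poly_order_le n P"
    and e: "\<And>\<phi> p. admissible \<phi> \<Longrightarrow> p \<in> S3 \<Longrightarrow> F \<phi> p = polyval P \<phi> p / ht \<phi> p ^ k"
  then show ?thesis
    using poly_order_le_poly_mult[OF _ poly_order_le_poly_ht, of n P] ht_nonzero
    by (intro jet_quotI[of n "poly_mult P poly_ht"])
        (simp_all add: polyval_poly_mult ht_polyval[symmetric])
qed

lemma jet_quot_mono_power: "jet_quot n k F \<Longrightarrow> k \<le> k' \<Longrightarrow> jet_quot n k' F"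
proof (induction k')
  case (Suc k')
  then show ?case by (cases "k = Suc k'") (auto intro: jet_quot_Suc_power)
qed simp

lemma jet_quot_mono: "jet_quot n k F \<Longrightarrow> n \<le> n' \<Longrightarrow> k \<le> k' \<Longrightarrow> jet_quot n' k' F"
  using jet_quot_mono_order jet_quot_mono_power by blast

lemma jet_quot_mono0: "jet_quot 0 0 F \<Longrightarrow> jet_quot n k F"
  using jet_quot_mono by blast

lemma jet_quot_add:
  assumes "jet_quot n k F" and "jet_quot n k G"
  shows "jet_quot n k (\<lambda>\<phi> p. F \<phi> p + G \<phi> p)"
  using assms
proof (elim jet_quotE)
  fix P Q assume "poly_order_le n P" "poly_order_le n Q"
    and "\<And>\<phi> p. admissible \<phi> \<Longrightarrow> p \<in> S3 \<Longrightarrow> F \<phi> p = polyval P \<phi> p / ht \<phi> p ^ k"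
    and "\<And>\<phi> p. admissible \<phi> \<Longrightarrow> p \<in> S3 \<Longrightarrow> G \<phi> p = polyval Q \<phi> p / ht \<phi> p ^ k"
  then show ?thesis
    by (intro jet_quotI[of n "P @ Q"]) (auto simp: poly_order_le_append polyval_append
        add_divide_distrib)
qed

lemma jet_quot_scale:
  assumes "jet_quot n k F"
  shows "jet_quot n k (\<lambda>\<phi> p. c * F \<phi> p)"
  using assms
proof (rule jet_quotE)
  fix P assume "poly_order_le n P"
    and "\<And>\<phi> p. admissible \<phi> \<Longrightarrow> p \<in> S3 \<Longrightarrow> F \<phi> p = polyval P \<phi> p / ht \<phi> p ^ k"
  then show ?thesis
    by (intro jet_quotI[of n "poly_smult c P"]) (auto simp: poly_order_le_poly_smult polyval_poly_smult)
qed

lemma jet_quot_neg: "jet_quot n k F \<Longrightarrow> jet_quot n k (\<lambda>\<phi> p. - F \<phi> p)"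
  using jet_quot_scale[of n k F "-1"] by simp

lemma jet_quot_diff: "jet_quot n k F \<Longrightarrow> jet_quot n k G \<Longrightarrow> jet_quot n k (\<lambda>\<phi> p. F \<phi> p - G \<phi> p)"
  using jet_quot_add[of n k F "\<lambda>\<phi> p. - G \<phi> p"] jet_quot_neg by simp

lemma jet_quot_mult:
  assumes "jet_quot n1 k1 F" and "jet_quot n2 k2 G"
  shows "jet_quot (n1 + n2) (k1 + k2) (\<lambda>\<phi> p. F \<phi> p * G \<phi> p)"
  using assms
proof (elim jet_quotE)
  fix P Q assume "poly_order_le n1 P" "poly_order_le n2 Q"
    and "\<And>\<phi> p. admissible \<phi> \<Longrightarrow> p \<in> S3 \<Longrightarrow> F \<phi> p = polyval P \<phi> p / ht \<phi> p ^ k1"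
    and "\<And>\<phi> p. admissible \<phi> \<Longrightarrow> p \<in> S3 \<Longrightarrow> G \<phi> p = polyval Q \<phi> p / ht \<phi> p ^ k2"
  then show ?thesis
    by (intro jet_quotI[of _ "poly_mult P Q"])
        (auto simp: poly_order_le_poly_mult polyval_poly_mult power_add)
qed

lemma jet_quot_mult_left0: "jet_quot 0 0 F \<Longrightarrow> jet_quot n k G \<Longrightarrow> jet_quot n k (\<lambda>\<phi> p. F \<phi> p * G \<phi> p)"
  using jet_quot_mult[of 0 0 F n k G] by simp

lemma jet_quot_const: "jet_quot 0 0 (\<lambda>\<phi> p. c)"
  by (rule jet_quotI[of 0 "poly_const c"]) (auto simp: poly_order_le_poly_const polyval_poly_const)

lemma jet_quot_phi: "jet_quot 0 0 (\<lambda>\<phi> p. \<phi> p)"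
  by (rule jet_quotI[of 0 "[(1, [(False, [])])]"])
     (auto simp: poly_order_le_def mon_order_def polyval_monval monval_def jet_def)

lemma jet_quot_cnj_phi: "jet_quot 0 0 (\<lambda>\<phi> p. cnj (\<phi> p))"
  by (rule jet_quotI[of 0 "[(1, [(True, [])])]"])
     (auto simp: poly_order_le_def mon_order_def polyval_monval monval_def jet_def)

lemma jet_quot_ht: "jet_quot 0 0 ht"
  by (rule jet_quotI[of 0 poly_ht]) (auto simp: poly_order_le_poly_ht ht_polyval)

lemma jet_quot_inverse_ht: "jet_quot 0 1 (\<lambda>\<phi> p. inverse (ht \<phi> p))"
  by (rule jet_quotI[of 0 "poly_const 1"])
     (auto simp: poly_order_le_poly_const polyval_poly_const divide_inverse)

lemma jet_quot_inverse_ht_mult: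
  "jet_quot n k F \<Longrightarrow> jet_quot n (Suc k) (\<lambda>\<phi> p. inverse (ht \<phi> p) * F \<phi> p)"
  using jet_quot_mult[OF jet_quot_inverse_ht] by simp

lemma jet_quot_divide_ht: "jet_quot n k F \<Longrightarrow> jet_quot n (k + 1) (\<lambda>\<phi> p. F \<phi> p / ht \<phi> p)"
  using jet_quot_mult[OF _ jet_quot_inverse_ht, of n k F] by (simp add: divide_inverse)

lemma jet_quot_cnj:
  assumes "jet_quot n k F"
  shows "jet_quot n k (\<lambda>\<phi> p. cnj (F \<phi> p))"
  using assms
proof (rule jet_quotE)
  fix P assume "poly_order_le n P"
    and "\<And>\<phi> p. admissible \<phi> \<Longrightarrow> p \<in> S3 \<Longrightarrow> F \<phi> p = polyval P \<phi> p / ht \<phi> p ^ k"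
  then show ?thesis
    by (intro jet_quotI[of n "poly_cnj P"])
       (auto simp: poly_order_le_poly_cnj polyval_poly_cnj[OF admissible_smooth] cnj_ht)
qed

lemma jet_quot_differentiable:
  assumes J: "jet_quot n k F" and g: "admissible \<phi>" and p: "p \<in> S3"
  shows "differentiable_S3 (F \<phi>) p"
proof -
  obtain P where e: "\<And>\<phi> p. admissible \<phi> \<Longrightarrow> p \<in> S3 \<Longrightarrow> F \<phi> p = polyval P \<phi> p / ht \<phi> p ^ k"
    using J unfolding jet_quot_def by blast
  have "differentiable_S3 (\<lambda>q. polyval P \<phi> q / ht \<phi> q ^ k) p"
    unfolding ht_fun
    by (intro differentiable_divide differentiable_power
        differentiable_polyval[OF admissible_smooth[OF g] p])
       (use ht_nonzero[OF g p] in \<open>simp add: ht_fun\<close>)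
  then show ?thesis
    using differentiable_S3_cong[OF p, of "F \<phi>"] e[OF g] by simp
qed

lemma jet_quot_derivation:
  assumes J: "jet_quot n k F" and X: "\<And>p. tangent p (X p)"
    and D: "\<And>\<phi> p P. smoothS3 \<phi> \<Longrightarrow> p \<in> S3 \<Longrightarrow> cder X (polyval P \<phi>) p = polyval (DP P) \<phi> p"
    and DP: "\<And>n P. poly_order_le n P \<Longrightarrow> poly_order_le (n + m) (DP P)"
  shows "jet_quot (n + m) (k + 1) (\<lambda>\<phi> p. cder X (F \<phi>) p)"
proof -
  obtain P where o: "poly_order_le n P"
    and e: "\<And>\<phi> p. admissible \<phi> \<Longrightarrow> p \<in> S3 \<Longrightarrow> F \<phi> p = polyval P \<phi> p / ht \<phi> p ^ k"
    using J unfolding jet_quot_def by blast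
  define Q where "Q = poly_mult poly_ht (DP P) @ poly_smult (- of_nat k) (poly_mult P (DP poly_ht))"
  show ?thesis
  proof (rule jet_quotI[of _ Q])
    show "poly_order_le (n + m) Q"
      using poly_order_le_poly_mult[OF poly_order_le_poly_ht DP[OF o]] poly_order_le_poly_mult[OF o
          DP[OF poly_order_le_poly_ht]]
      by (auto simp: Q_def intro!: poly_order_le_append poly_order_le_poly_smult)
    fix \<phi> p assume g: "admissible \<phi>" and p: "p \<in> S3"
    have sm: "smoothS3 \<phi>" using admissible_smooth[OF g] .
    have "cder X (F \<phi>) p = cder X (\<lambda>q. polyval P \<phi> q / ht \<phi> q ^ k) p"
      by (rule cder_S3_cong[OF p]) (simp add: e[OF g])
    also have "\<dots> = (ht \<phi> p * cder X (polyval P \<phi>) p - of_nat k * polyval P \<phi> p * cder X (ht \<phi>) p)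
        / ht \<phi> p ^ (k + 1)"
      by (rule cder_quot[where X=X, OF p X differentiable_polyval[OF sm p]])
         (use ht_nonzero[OF g p] differentiable_polyval[OF sm p] in \<open>simp_all add: ht_fun\<close>)
    also have "\<dots> = polyval Q \<phi> p / ht \<phi> p ^ (k + 1)"
      by (simp add: Q_def D[OF sm p] polyval_append polyval_poly_smult polyval_poly_mult ht_fun)
    finally show "cder X (F \<phi>) p = polyval Q \<phi> p / ht \<phi> p ^ (k + 1)" .
  qed
qed

lemma jet_quot_derivation_poly:
  assumes J: "jet_quot n 0 F"
    and D: "\<And>\<phi> p P. smoothS3 \<phi> \<Longrightarrow> p \<in> S3 \<Longrightarrow> cder X (polyval P \<phi>) p = polyval (DP P) \<phi> p"
    and DP: "\<And>n P. poly_order_le n P \<Longrightarrow> poly_order_le (n + m) (DP P)"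
  shows "jet_quot (n + m) 0 (\<lambda>\<phi> p. cder X (F \<phi>) p)"
proof -
  obtain P where o: "poly_order_le n P"
    and e: "\<And>\<phi> p. admissible \<phi> \<Longrightarrow> p \<in> S3 \<Longrightarrow> F \<phi> p = polyval P \<phi> p / ht \<phi> p ^ 0"
    using J unfolding jet_quot_def by blast
  show ?thesis
  proof (rule jet_quotI[OF DP[OF o]])
    fix \<phi> p assume g: "admissible \<phi>" and p: "p \<in> S3"
    have "cder X (F \<phi>) p = cder X (polyval P \<phi>) p"
      by (rule cder_S3_cong[OF p]) (simp add: e[OF g])
    then show "cder X (F \<phi>) p = polyval (DP P) \<phi> p / ht \<phi> p ^ 0"
      by (simp add: D[OF admissible_smooth[OF g] p])
  qed
qed

lemma jet_quot_Zsel: "jet_quot n k F \<Longrightarrow> jet_quot (n + 1) (k + 1) (\<lambda>\<phi> p. cder (Zsel d) (F \<phi>) p)"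
  by (rule jet_quot_derivation[OF _ tangent_Zsel cder_Zsel_polyval poly_order_le_poly_deriv])

lemma jet_quot_Tf: "jet_quot n k F \<Longrightarrow> jet_quot (n + 2) (k + 1) (\<lambda>\<phi> p. cder Tf (F \<phi>) p)"
  by (rule jet_quot_derivation[OF _ tangent_Tf cder_Tf_polyval poly_order_le_poly_derivT])

lemma jet_quot_Zf1: "jet_quot n k F \<Longrightarrow> jet_quot (n + 1) (k + 1) (\<lambda>\<phi> p. cder Zf1 (F \<phi>) p)"
  using jet_quot_Zsel[of n k F False] by (simp add: Zsel_def)

lemma jet_quot_Zf1b: "jet_quot n k F \<Longrightarrow> jet_quot (n + 1) (k + 1) (\<lambda>\<phi> p. cder Zf1b (F \<phi>) p)"
  using jet_quot_Zsel[of n k F True] by (simp add: Zsel_def)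

lemma jet_quot_Zt:
  assumes J: "jet_quot n k F"
  shows "jet_quot (n + 1) (k + 1) (\<lambda>\<phi> p. cder (Zt \<phi>) (F \<phi>) p)"
proof -
  have "jet_quot (n + 1) (k + 1) (\<lambda>\<phi> p. cder Zf1 (F \<phi>) p + \<phi> p * cder Zf1b (F \<phi>) p)"
    using jet_quot_add[OF jet_quot_Zf1[OF J] jet_quot_mult[OF jet_quot_phi jet_quot_Zf1b[OF J],
        unfolded add_0]] by simp
  then show ?thesis
    by (rule jet_quot_cong) (simp add: cder_Zt jet_quot_differentiable[OF J])
qed

lemma jet_quot_Ztb:
  assumes J: "jet_quot n k F"
  shows "jet_quot (n + 1) (k + 1) (\<lambda>\<phi> p. cder (Ztb \<phi>) (F \<phi>) p)"
proof -
  have "jet_quot (n + 1) (k + 1) (\<lambda>\<phi> p. cder Zf1b (F \<phi>) p + cnj (\<phi> p) * cder Zf1 (F \<phi>) p)"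
    using jet_quot_add[OF jet_quot_Zf1b[OF J] jet_quot_mult[OF jet_quot_cnj_phi jet_quot_Zf1[OF J],
        unfolded add_0]] by simp
  then show ?thesis
    by (rule jet_quot_cong) (simp add: cder_Ztb jet_quot_differentiable[OF J])
qed

lemma jet_quot_Zsel_poly: "jet_quot n 0 F \<Longrightarrow> jet_quot (n + 1) 0 (\<lambda>\<phi> p. cder (Zsel d) (F \<phi>) p)"
  by (rule jet_quot_derivation_poly[OF _ cder_Zsel_polyval poly_order_le_poly_deriv])

lemma jet_quot_Tf_poly: "jet_quot n 0 F \<Longrightarrow> jet_quot (n + 2) 0 (\<lambda>\<phi> p. cder Tf (F \<phi>) p)"
  by (rule jet_quot_derivation_poly[OF _ cder_Tf_polyval poly_order_le_poly_derivT])

lemma jet_quot_Zf1_poly: "jet_quot n 0 F \<Longrightarrow> jet_quot (n + 1) 0 (\<lambda>\<phi> p. cder Zf1 (F \<phi>) p)"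
  using jet_quot_Zsel_poly[of n F False] by (simp add: Zsel_def)

lemma jet_quot_Zf1b_poly: "jet_quot n 0 F \<Longrightarrow> jet_quot (n + 1) 0 (\<lambda>\<phi> p. cder Zf1b (F \<phi>) p)"
  using jet_quot_Zsel_poly[of n F True] by (simp add: Zsel_def)

lemma jet_quot_Zt_poly:
  assumes J: "jet_quot n 0 F"
  shows "jet_quot (n + 1) 0 (\<lambda>\<phi> p. cder (Zt \<phi>) (F \<phi>) p)"
proof -
  have "jet_quot (n + 1) 0 (\<lambda>\<phi> p. cder Zf1 (F \<phi>) p + \<phi> p * cder Zf1b (F \<phi>) p)"
    using jet_quot_add[OF jet_quot_Zf1_poly[OF J] jet_quot_mult[OF jet_quot_phi
        jet_quot_Zf1b_poly[OF J], unfolded add_0]] by simp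
  then show ?thesis
    by (rule jet_quot_cong) (simp add: cder_Zt jet_quot_differentiable[OF J])
qed

lemma jet_quot_Ztb_poly:
  assumes J: "jet_quot n 0 F"
  shows "jet_quot (n + 1) 0 (\<lambda>\<phi> p. cder (Ztb \<phi>) (F \<phi>) p)"
proof -
  have "jet_quot (n + 1) 0 (\<lambda>\<phi> p. cder Zf1b (F \<phi>) p + cnj (\<phi> p) * cder Zf1 (F \<phi>) p)"
    using jet_quot_add[OF jet_quot_Zf1b_poly[OF J] jet_quot_mult[OF jet_quot_cnj_phi
        jet_quot_Zf1_poly[OF J], unfolded add_0]] by simp
  then show ?thesis
    by (rule jet_quot_cong) (simp add: cder_Ztb jet_quot_differentiable[OF J])
qed

lemma jet_quot_Tf_phi: "jet_quot 2 0 (\<lambda>\<phi> p. cder Tf \<phi> p)" using jet_quot_Tf_poly[OF jet_quot_phi]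
    by (simp add: numeral_2_eq_2)

lemma jet_quot_Tf_cnj_phi: "jet_quot 2 0 (\<lambda>\<phi> p. cder Tf (\<lambda>q. cnj (\<phi> q)) p)"
    using jet_quot_Tf_poly[OF jet_quot_cnj_phi] by (simp add: numeral_2_eq_2)

lemma jet_quot_Zt_cnj_phi: "jet_quot 1 0 (\<lambda>\<phi> p. cder (Zt \<phi>) (\<lambda>q. cnj (\<phi> q)) p)"
    using jet_quot_Zt_poly[OF jet_quot_cnj_phi] by simp

lemma jet_quot_Ztb_phi: "jet_quot 1 0 (\<lambda>\<phi> p. cder (Ztb \<phi>) \<phi> p)" using jet_quot_Ztb_poly[OF jet_quot_phi]
    by simp

lemma jet_quot_Zt_ht: "jet_quot 1 0 (\<lambda>\<phi> p. cder (Zt \<phi>) (ht \<phi>) p)" using jet_quot_Zt_poly[OF jet_quot_ht]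
    by simp

section \<open>Vector fields in the frame (T, Z_1, Z_1bar) and their brackets\<close>

definition field3 :: "(pt \<Rightarrow> complex) \<Rightarrow> (pt \<Rightarrow> complex) \<Rightarrow> (pt \<Rightarrow> complex) \<Rightarrow> cvf" where
  "field3 a b c q = (a q * (\<i> * fst q) + b q * cnj (snd q) + c q * 0,
                  a q * (\<i> * snd q) + b q * (- cnj (fst q)) + c q * 0,
                  a q * (- \<i> * cnj (fst q)) + b q * 0 + c q * snd q,
                  a q * (- \<i> * cnj (snd q)) + b q * 0 + c q * (- fst q))"

lemma field3_qadd: "field3 a b c p = qadd (qscale (a p) (Tf p))
    (qadd (qscale (b p) (Zf1 p)) (qscale (c p) (Zf1b p)))"
  by (cases p) (simp add: field3_def qadd_def qscale_def Tf_def Zf1_def Zf1b_def)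

lemma field3_eq: "field3 a b c p = (a p * (\<i> * fst p) + b p * cnj (snd p),
                  a p * (\<i> * snd p) - b p * cnj (fst p),
                  - a p * \<i> * cnj (fst p) + c p * snd p,
                  - a p * \<i> * cnj (snd p) - c p * fst p)"
  by (simp add: field3_def)

lemma tangent_field3: "tangent p (field3 a b c p)"
  by (simp add: field3_qadd tangent_qadd tangent_qscale tangent_Tf tangent_Zf1 tangent_Zf1b)

lemma Tf_field3: "Tf = field3 (\<lambda>_. 1) (\<lambda>_. 0) (\<lambda>_. 0)"
  by (rule ext, case_tac x) (simp add: field3_def Tf_def)

lemma Zt_field3: "Zt \<phi> = field3 (\<lambda>_. 0) (\<lambda>_. 1) \<phi>"
  by (rule ext, case_tac x) (simp add: field3_def Zt_def qadd_def qscale_def Zf1_def Zf1b_def)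

lemma Ztb_field3: "Ztb \<phi> = field3 (\<lambda>_. 0) (\<lambda>q. cnj (\<phi> q)) (\<lambda>_. 1)"
  by (rule ext, case_tac x) (simp add: field3_def Ztb_def qadd_def qscale_def Zf1_def Zf1b_def)

definition lin4 :: "complex \<Rightarrow> complex \<Rightarrow> complex \<Rightarrow> complex \<Rightarrow> pt \<Rightarrow> complex" where
  "lin4 k1 k2 k3 k4 q = k1 * fst q + k2 * snd q + k3 * cnj (fst q) + k4 * cnj (snd q)"

lemma bounded_linear_lin4: "bounded_linear (lin4 k1 k2 k3 k4)"
proof -
  have "(lin4 k1 k2 k3 k4 has_derivative lin4 k1 k2 k3 k4) (at 0)"
    unfolding lin4_def[abs_def]
    by (intro has_derivative_add has_derivative_mult_right has_derivative_fst has_derivative_snd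
        has_derivative_cnj has_derivative_ident)
  then show ?thesis by (rule has_derivative_bounded_linear)
qed

lemma cvec_apply_lin4:
  "cvec_apply (lin4 k1 k2 k3 k4) (x1, x2, x3, x4) = k1 * x1 + k2 * x2 + k3 * x3 + k4 * x4"
  by (simp add: cvec_apply_def lin4_def re_vec_def im_vec_def field_simps)

lemma cder_lin4_comb:
  assumes p: "p \<in> S3" and t: "tangent p (X p)" and a: "differentiable_S3 a p"
      and b: "differentiable_S3 b p" and c: "differentiable_S3 c p"
  shows "cder X (\<lambda>q. a q * lin4 k1 k2 k3 k4 q + b q * lin4 l1 l2 l3 l4 q + c q * lin4 m1 m2 m3 m4 q) p
    = a p * cvec_apply (lin4 k1 k2 k3 k4) (X p) + lin4 k1 k2 k3 k4 p * cder X a p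
    + b p * cvec_apply (lin4 l1 l2 l3 l4) (X p) + lin4 l1 l2 l3 l4 p * cder X b p
    + c p * cvec_apply (lin4 m1 m2 m3 m4) (X p) + lin4 m1 m2 m3 m4 p * cder X c p"
proof -
  obtain Da Db Dc where da: "(a has_derivative Da) (at p within S3)"
      and db: "(b has_derivative Db) (at p within S3)"
    and dc: "(c has_derivative Dc) (at p within S3)"
    using a b c by (auto simp: differentiable_def)
  have L: "(lin4 k l m n has_derivative lin4 k l m n) (at p within S3)" for k l m n
    by (rule bounded_linear_imp_has_derivative[OF bounded_linear_lin4])
  have d: "((\<lambda>q. a q * lin4 k1 k2 k3 k4 q + b q * lin4 l1 l2 l3 l4 q + c q * lin4 m1 m2 m3 m4 q)
      has_derivative
     (\<lambda>h. (a p * lin4 k1 k2 k3 k4 h + Da h * lin4 k1 k2 k3 k4 p)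
         + (b p * lin4 l1 l2 l3 l4 h + Db h * lin4 l1 l2 l3 l4 p)
        + (c p * lin4 m1 m2 m3 m4 h + Dc h * lin4 m1 m2 m3 m4 p))) (at p within S3)"
    by (intro has_derivative_add has_derivative_mult da db dc L)
  show ?thesis
    using cder_has_derivative[of p X, OF p t d] cder_has_derivative[of p X,
        OF p t da] cder_has_derivative[of p X, OF p t db] cder_has_derivative[of p X, OF p t dc]
    by (simp add: cvec_apply_def algebra_simps)
qed

lemma field3_components:
  "(\<lambda>q. fst (field3 a b c q)) = (\<lambda>q. a q * lin4 \<i> 0 0 0 q + b q * lin4 0 0 0 1 q + c q
      * lin4 0 0 0 0 q)"
  "(\<lambda>q. fst (snd (field3 a b c q))) = (\<lambda>q. a q * lin4 0 \<i> 0 0 q + b q * lin4 0 0 (-1) 0 q + c q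
      * lin4 0 0 0 0 q)"
  "(\<lambda>q. fst (snd (snd (field3 a b c q)))) =
      (\<lambda>q. a q * lin4 0 0 (- \<i>) 0 q + b q * lin4 0 0 0 0 q + c q * lin4 0 1 0 0 q)"
  "(\<lambda>q. snd (snd (snd (field3 a b c q)))) =
      (\<lambda>q. a q * lin4 0 0 0 (- \<i>) q + b q * lin4 0 0 0 0 q + c q * lin4 (-1) 0 0 0 q)"
  by (simp_all add: fun_eq_iff field3_def lin4_def)

lemma cder_field3_const: "p \<in> S3 \<Longrightarrow> cder (field3 a b c) (\<lambda>q. k) p = 0"
  using cder_const[of p "field3 a b c" k] tangent_field3 by simp

lemma bracket_field3:
  assumes p: "p \<in> S3" and a: "differentiable_S3 a p" and b: "differentiable_S3 b p"
      and c: "differentiable_S3 c p"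
    and a': "differentiable_S3 a' p" and b': "differentiable_S3 b' p" and c': "differentiable_S3 c' p"
  shows "bracket (field3 a b c) (field3 a' b' c') p =
    field3 (\<lambda>_. cder (field3 a b c) a' p - cder (field3 a' b' c') a p - \<i> * (b p * c' p - c p * b' p))
        (\<lambda>_. cder (field3 a b c) b' p - cder (field3 a' b' c') b p - 2 * \<i> * (a p * b' p - b p * a' p))
        (\<lambda>_. cder (field3 a b c) c' p - cder (field3 a' b' c') c p + 2 * \<i> * (a p * c' p - c p * a' p)) p"
proof -
  note comp = cder_lin4_comb[where X="field3 _ _ _", OF p tangent_field3]
  show ?thesis
    unfolding bracket_def field3_components comp[OF a' b' c'] comp[OF a b c]
    by (simp add: field3_eq cvec_apply_lin4 lin4_def algebra_simps)
qed

lemma ht_eq: "ht \<phi> p = 1 - \<phi> p * cnj (\<phi> p)"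
  by (simp add: ht_def cnorm_sq)

lemma S3_cnj_sum: "p \<in> S3 \<Longrightarrow> fst p * cnj (fst p) + snd p * cnj (snd p) = 1"
proof -
  assume p: "p \<in> S3"
  obtain z w where pz: "p = (z, w)" by (cases p)
  have "(cmod z)\<^sup>2 + (cmod w)\<^sup>2 = 1" using p pz by (simp add: S3_def)
  then have "complex_of_real ((cmod z)\<^sup>2 + (cmod w)\<^sup>2) = 1" by simp
  then show ?thesis using pz by (simp add: cnorm_sq)
qed

abbreviation vec3 :: "pt \<Rightarrow> complex \<Rightarrow> complex \<Rightarrow> complex \<Rightarrow> cvec" where
  "vec3 p \<alpha> \<beta> \<gamma> \<equiv> field3 (\<lambda>_. \<alpha>) (\<lambda>_. \<beta>) (\<lambda>_. \<gamma>) p"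

lemma field3_vec3: "field3 a b c q = vec3 q (a q) (b q) (c q)"
  by (simp add: field3_def)

lemma Tf_vec3: "Tf p = vec3 p 1 0 0" by (simp add: Tf_field3)

lemma Zt_vec3: "Zt \<phi> p = vec3 p 0 1 (\<phi> p)" unfolding Zt_field3 by (rule field3_vec3)

lemma Ztb_vec3: "Ztb \<phi> p = vec3 p 0 (cnj (\<phi> p)) 1" unfolding Ztb_field3 by (rule field3_vec3)

lemma vec3_coeffs:
  assumes p: "p \<in> S3"
  shows "\<alpha> = - \<i> * (cnj (fst p) * fst (vec3 p \<alpha> \<beta> \<gamma>) + cnj (snd p) * fst (snd (vec3 p \<alpha> \<beta> \<gamma>)))"
    "\<beta> = snd p * fst (vec3 p \<alpha> \<beta> \<gamma>) - fst p * fst (snd (vec3 p \<alpha> \<beta> \<gamma>))"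
    "\<gamma> = cnj (snd p) * fst (snd (snd (vec3 p \<alpha> \<beta> \<gamma>))) - cnj (fst p) * snd (snd (snd (vec3 p \<alpha> \<beta> \<gamma>)))"
proof -
  obtain z w where pz: "p = (z, w)" by (cases p)
  have s: "z * cnj z + w * cnj w = 1" using S3_cnj_sum[OF p] pz by simp
  have e1: "cnj z * (\<alpha> * (\<i> * z) + \<beta> * cnj w) + cnj w * (\<alpha> * (\<i> * w) - \<beta> * cnj z) = \<i> * \<alpha>
      * (z * cnj z + w * cnj w)"
    by (simp add: algebra_simps)
  have e2: "w * (\<alpha> * (\<i> * z) + \<beta> * cnj w) - z * (\<alpha> * (\<i> * w) - \<beta> * cnj z) = \<beta> * (z * cnj z + w * cnj w)"
    by (simp add: algebra_simps)
  have e3: "cnj w * (- \<alpha> * \<i> * cnj z + \<gamma> * w) - cnj z * (- \<alpha> * \<i> * cnj w - \<gamma> * z) = \<gamma>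
      * (z * cnj z + w * cnj w)"
    by (simp add: algebra_simps)
  show "\<alpha> = - \<i> * (cnj (fst p) * fst (vec3 p \<alpha> \<beta> \<gamma>) + cnj (snd p) * fst (snd (vec3 p \<alpha> \<beta> \<gamma>)))"
    unfolding pz field3_eq fst_conv snd_conv e1 s by simp
  show "\<beta> = snd p * fst (vec3 p \<alpha> \<beta> \<gamma>) - fst p * fst (snd (vec3 p \<alpha> \<beta> \<gamma>))"
    unfolding pz field3_eq fst_conv snd_conv e2 s by simp
  show "\<gamma> = cnj (snd p) * fst (snd (snd (vec3 p \<alpha> \<beta> \<gamma>))) - cnj (fst p) * snd (snd (snd (vec3 p \<alpha> \<beta> \<gamma>)))"
    unfolding pz field3_eq fst_conv snd_conv e3 s by simp
qed

lemma vec3_inj: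
  assumes p: "p \<in> S3" and e: "vec3 p \<alpha> \<beta> \<gamma> = vec3 p \<alpha>' \<beta>' \<gamma>'"
  shows "\<alpha> = \<alpha>'" "\<beta> = \<beta>'" "\<gamma> = \<gamma>'"
proof -
  note A = vec3_coeffs[OF p, where \<alpha>=\<alpha> and \<beta>=\<beta> and \<gamma>=\<gamma>]
  note B = vec3_coeffs[OF p, where \<alpha>=\<alpha>' and \<beta>=\<beta>' and \<gamma>=\<gamma>']
  show "\<alpha> = \<alpha>'" using A(1) B(1) e by metis
  show "\<beta> = \<beta>'" using A(2) B(2) e by metis
  show "\<gamma> = \<gamma>'" using A(3) B(3) e by metis
qed

definition qneg :: "cvec \<Rightarrow> cvec" where "qneg v = (case v of (a, b, c, d) \<Rightarrow> (-a, -b, -c, -d))"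

lemma qneg_vec3: "qneg (vec3 p \<alpha> \<beta> \<gamma>) = vec3 p (-\<alpha>) (-\<beta>) (-\<gamma>)"
  by (simp add: qneg_def field3_def algebra_simps)

lemma qconj_vec3: "qconj (vec3 p \<alpha> \<beta> \<gamma>) = vec3 p (cnj \<alpha>) (cnj \<gamma>) (cnj \<beta>)"
  by (cases p) (simp add: qconj_def field3_def)

lemma bracket_swap: "bracket Y X p = qneg (bracket X Y p)"
  by (simp add: bracket_def qneg_def)

lemma bracket_self: "bracket X X p = vec3 p 0 0 0"
  by (simp add: bracket_def field3_def)

section \<open>The coframe dual to (T, Zt, Ztb)\<close>

definition frame_comb :: "(pt \<Rightarrow> complex) \<Rightarrow> pt \<Rightarrow> complex \<Rightarrow> complex \<Rightarrow> complex \<Rightarrow> cvec" where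
  "frame_comb \<phi> p c0 c1 c2 = qadd (qscale c0 (Tf p)) (qadd (qscale c1 (Zt \<phi> p)) (qscale c2 (Ztb \<phi> p)))"

lemma frame_comb_vec3: "frame_comb \<phi> p c0 c1 c2 = vec3 p c0 (c1 + c2 * cnj (\<phi> p)) (c1 * \<phi> p + c2)"
  by (cases p) (simp add: frame_comb_def field3_def qadd_def qscale_def Tf_def Zt_def Ztb_def Zf1_def
      Zf1b_def algebra_simps)

lemma frame_coeffs_frame_comb:
  assumes p: "p \<in> S3" and h: "ht \<phi> p \<noteq> 0"
  shows "frame_coeffs \<phi> p (frame_comb \<phi> p c0 c1 c2) = (c0, c1, c2)"
  unfolding frame_coeffs_def
proof (rule the_equality, goal_cases)
  case 1
  show ?case by (simp add: frame_comb_def)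
next
  case (2 x)
  then obtain d0 d1 d2 where x: "x = (d0, d1, d2)"
    and e: "frame_comb \<phi> p c0 c1 c2 = frame_comb \<phi> p d0 d1 d2"
    by (cases x) (auto simp: frame_comb_def)
  have i: "c0 = d0" "c1 + c2 * cnj (\<phi> p) = d1 + d2 * cnj (\<phi> p)" "c1 * \<phi> p + c2 = d1 * \<phi> p + d2"
    using vec3_inj[OF p e[unfolded frame_comb_vec3]] by simp_all
  have "(c1 - d1) * ht \<phi> p = 0" using i(2) i(3) unfolding ht_eq by algebra
  then have "c1 = d1" using h by simp
  then show ?case using x i by simp
qed

lemma vec3_eq_frame_comb:
  assumes h: "ht \<phi> p \<noteq> 0"
  shows "vec3 p \<alpha> \<beta> \<gamma> = frame_comb \<phi> p \<alpha> ((\<beta> - cnj (\<phi> p) * \<gamma>) / ht \<phi> p) ((\<gamma> - \<phi> p * \<beta>) / ht \<phi> p)"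
proof -
  have x1: "(\<beta> - cnj (\<phi> p) * \<gamma>) + (\<gamma> - \<phi> p * \<beta>) * cnj (\<phi> p) = \<beta> * ht \<phi> p"
    "(\<beta> - cnj (\<phi> p) * \<gamma>) * \<phi> p + (\<gamma> - \<phi> p * \<beta>) = \<gamma> * ht \<phi> p"
    by (simp_all add: ht_eq algebra_simps)
  have "(\<beta> - cnj (\<phi> p) * \<gamma>) / ht \<phi> p + (\<gamma> - \<phi> p * \<beta>) / ht \<phi> p * cnj (\<phi> p) = \<beta>"
    "(\<beta> - cnj (\<phi> p) * \<gamma>) / ht \<phi> p * \<phi> p + (\<gamma> - \<phi> p * \<beta>) / ht \<phi> p = \<gamma>"
    using x1 h by (simp_all add: field_simps)
  then show ?thesis by (simp add: frame_comb_vec3)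
qed

lemma frame_coeffs_vec3:
  assumes p: "p \<in> S3" and h: "ht \<phi> p \<noteq> 0"
  shows "frame_coeffs \<phi> p (vec3 p \<alpha> \<beta> \<gamma>) = (\<alpha>, (\<beta> - cnj (\<phi> p) * \<gamma>) / ht \<phi> p, (\<gamma> - \<phi> p * \<beta>) / ht \<phi> p)"
  using frame_coeffs_frame_comb[OF p h] vec3_eq_frame_comb[OF h] by simp

lemma theta_vec3:
  assumes p: "p \<in> S3"
  shows "theta p (vec3 p \<alpha> \<beta> \<gamma>) = \<alpha>"
proof -
  obtain z w where pz: "p = (z, w)" by (cases p)
  have th: "theta p v = - \<i> * (cnj (fst p) * fst v + cnj (snd p) * fst (snd v))" for v
    by (cases v) (simp add: theta_def pz)
  show ?thesis using vec3_coeffs(1)[OF p, of \<alpha> \<beta> \<gamma>] th by simp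
qed

context
  fixes \<phi> :: "pt \<Rightarrow> complex"
  assumes g: "admissible \<phi>"
begin

lemma admissible_differentiable: "q \<in> S3 \<Longrightarrow> differentiable_S3 \<phi> q"
  using smoothS3_differentiable[OF admissible_smooth[OF g]] .

lemma admissible_differentiable_cnj: "q \<in> S3 \<Longrightarrow> differentiable_S3 (\<lambda>q. cnj (\<phi> q)) q"
  using smoothS3_differentiable[OF smoothS3_cnj[OF admissible_smooth[OF g]]] .

lemma admissible_differentiable_ht: "q \<in> S3 \<Longrightarrow> differentiable_S3 (ht \<phi>) q"
  using differentiable_polyval[OF admissible_smooth[OF g]] by (simp add: ht_fun)

lemma frame_coeffs_frame:
  assumes q: "q \<in> S3"
  shows "frame_coeffs \<phi> q (Tf q) = (1, 0, 0)" "frame_coeffs \<phi> q (Zt \<phi> q) = (0, 1, 0)"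
    "frame_coeffs \<phi> q (Ztb \<phi> q) = (0, 0, 1)"
proof -
  have h: "ht \<phi> q \<noteq> 0" using ht_nonzero[OF g q] .
  then have "(1 - cnj (\<phi> q) * \<phi> q) / ht \<phi> q = 1" "(1 - \<phi> q * cnj (\<phi> q)) / ht \<phi> q = 1"
    by (simp_all add: ht_eq mult.commute)
  then show "frame_coeffs \<phi> q (Tf q) = (1, 0, 0)" "frame_coeffs \<phi> q (Zt \<phi> q) = (0, 1, 0)"
    "frame_coeffs \<phi> q (Ztb \<phi> q) = (0, 0, 1)"
    by (simp_all add: Tf_vec3 Zt_vec3 Ztb_vec3 frame_coeffs_vec3[OF q h])
qed

lemma th1_frame:
  assumes q: "q \<in> S3"
  shows "th1 \<phi> q (Tf q) = 0" "th1 \<phi> q (Zt \<phi> q) = 1" "th1 \<phi> q (Ztb \<phi> q) = 0"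
    "th1b \<phi> q (Tf q) = 0" "th1b \<phi> q (Zt \<phi> q) = 0" "th1b \<phi> q (Ztb \<phi> q) = 1"
  by (simp_all add: th1_def th1b_def frame_coeffs_frame[OF q])

lemma theta_frame:
  assumes q: "q \<in> S3"
  shows "theta q (Tf q) = 1" "theta q (Zt \<phi> q) = 0" "theta q (Ztb \<phi> q) = 0"
  by (simp_all add: Tf_vec3 Zt_vec3 Ztb_vec3 theta_vec3[OF q])

lemma frame_form_frame:
  assumes q: "q \<in> S3"
  shows "frame_form \<phi> q (w0, w1, w2) (Tf q) = w0" "frame_form \<phi> q (w0, w1, w2) (Zt \<phi> q) = w1"
    "frame_form \<phi> q (w0, w1, w2) (Ztb \<phi> q) = w2"
  by (simp_all add: frame_form_def frame_coeffs_frame[OF q])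

lemma th1_vec3: "q \<in> S3 \<Longrightarrow> th1 \<phi> q (vec3 q \<alpha> \<beta> \<gamma>) = (\<beta> - cnj (\<phi> q) * \<gamma>) / ht \<phi> q"
  by (simp add: th1_def frame_coeffs_vec3 ht_nonzero[OF g])

lemma frame_form_vec3: "q \<in> S3 \<Longrightarrow> frame_form \<phi> q (w0, w1, w2) (vec3 q \<alpha> \<beta> \<gamma>) =
   w0 * \<alpha> + w1 * ((\<beta> - cnj (\<phi> q) * \<gamma>) / ht \<phi> q) + w2 * ((\<gamma> - \<phi> q * \<beta>) / ht \<phi> q)"
  by (simp add: frame_form_def frame_coeffs_vec3 ht_nonzero[OF g])

end

section \<open>Tanaka-Webster connection and torsion\<close>

text \<open>
  On the frame, \<open>d\<theta>\<^sup>1(X, Y) = -\<theta>\<^sup>1([X, Y])\<close>, so the structure equations force the values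
  of \<open>\<omega>\<^sub>1\<^sup>1\<close> on \<open>T\<close> and \<open>Ztb\<close> and the torsion to be read off from brackets; the value
  on \<open>Zt\<close> is then fixed by \<open>\<omega> + \<omega>bar = h\<^sup>-\<^sup>1 dh\<close>.
\<close>

definition conn0 :: "(pt \<Rightarrow> complex) \<Rightarrow> pt \<Rightarrow> complex" where
  "conn0 \<phi> p = th1 \<phi> p (bracket Tf (Zt \<phi>) p)"

definition tors :: "(pt \<Rightarrow> complex) \<Rightarrow> pt \<Rightarrow> complex" where
  "tors \<phi> p = - th1 \<phi> p (bracket Tf (Ztb \<phi>) p)"

definition conn2 :: "(pt \<Rightarrow> complex) \<Rightarrow> pt \<Rightarrow> complex" where
  "conn2 \<phi> p = - th1 \<phi> p (bracket (Zt \<phi>) (Ztb \<phi>) p)"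

definition conn1 :: "(pt \<Rightarrow> complex) \<Rightarrow> pt \<Rightarrow> complex" where
  "conn1 \<phi> p = cder (Zt \<phi>) (ht \<phi>) p / ht \<phi> p - cnj (conn2 \<phi> p)"

context
  fixes \<phi> :: "pt \<Rightarrow> complex"
  assumes g: "admissible \<phi>"
begin

lemma bracket_Tf_Zt:
  assumes p: "p \<in> S3"
  shows "bracket Tf (Zt \<phi>) p = vec3 p 0 (-2 * \<i>) (cder Tf \<phi> p + 2 * \<i> * \<phi> p)"
  unfolding Tf_field3 Zt_field3
  by (subst bracket_field3[OF p])
     (simp_all add: admissible_differentiable[OF g p] cder_field3_const[OF p])

lemma bracket_Tf_Ztb:
  assumes p: "p \<in> S3"
  shows "bracket Tf (Ztb \<phi>) p = vec3 p 0 (cder Tf (\<lambda>q. cnj (\<phi> q)) p - 2 * \<i> * cnj (\<phi> p)) (2 * \<i>)"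
  unfolding Tf_field3 Ztb_field3
  by (subst bracket_field3[OF p]) (simp_all add: admissible_differentiable_cnj[OF g p]
      cder_field3_const[OF p])

lemma bracket_Zt_Ztb:
  assumes p: "p \<in> S3"
  shows "bracket (Zt \<phi>) (Ztb \<phi>) p = vec3 p (- \<i> * ht \<phi> p) (cder (Zt \<phi>) (\<lambda>q. cnj (\<phi> q)) p)
      (- cder (Ztb \<phi>) \<phi> p)"
  unfolding Zt_field3 Ztb_field3
  by (subst bracket_field3[OF p]) (simp_all add: admissible_differentiable[OF g p]
      admissible_differentiable_cnj[OF g p] cder_field3_const[OF p] ht_eq algebra_simps)

lemma tangent_frame: "X \<in> set (frame \<phi>) \<Longrightarrow> tangent p (X p)"
  by (auto simp: frame_def tangent_Tf tangent_Zt tangent_Ztb)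

lemma th1_frame_const:
  assumes Y: "Y \<in> set (frame \<phi>)"
  shows "\<exists>k. \<forall>q\<in>S3. th1 \<phi> q (Y q) = k"
  using Y th1_frame[OF g] by (auto simp: frame_def)

lemma dform1_th1_frame:
  assumes p: "p \<in> S3" and X: "X \<in> set (frame \<phi>)" and Y: "Y \<in> set (frame \<phi>)"
  shows "dform1 (th1 \<phi>) X Y p = - th1 \<phi> p (bracket X Y p)"
proof -
  obtain k1 where k1: "\<forall>q\<in>S3. th1 \<phi> q (Y q) = k1" using th1_frame_const[OF Y] by blast
  obtain k2 where k2: "\<forall>q\<in>S3. th1 \<phi> q (X q) = k2" using th1_frame_const[OF X] by blast
  have "cder X (\<lambda>q. th1 \<phi> q (Y q)) p = cder X (\<lambda>q. k1) p" by (rule cder_S3_cong[OF p]) (use k1 in simp)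
  also have "\<dots> = 0" using cder_const[of p X k1] p tangent_frame[OF X] by simp
  finally have a: "cder X (\<lambda>q. th1 \<phi> q (Y q)) p = 0" .
  have "cder Y (\<lambda>q. th1 \<phi> q (X q)) p = cder Y (\<lambda>q. k2) p" by (rule cder_S3_cong[OF p]) (use k2 in simp)
  also have "\<dots> = 0" using cder_const[of p Y k2] p tangent_frame[OF Y] by simp
  finally have b: "cder Y (\<lambda>q. th1 \<phi> q (X q)) p = 0" .
  show ?thesis by (simp add: dform1_def a b)
qed

lemma th1_qneg: "p \<in> S3 \<Longrightarrow> th1 \<phi> p (qneg (vec3 p \<alpha> \<beta> \<gamma>)) = - th1 \<phi> p (vec3 p \<alpha> \<beta> \<gamma>)"
proof -
  assume p: "p \<in> S3"
  have "(- \<beta> - cnj (\<phi> p) * - \<gamma>) / ht \<phi> p = - ((\<beta> - cnj (\<phi> p) * \<gamma>) / ht \<phi> p)"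
    by (simp add: diff_divide_distrib)
  then show ?thesis by (simp only: qneg_vec3 th1_vec3[OF g p])
qed

lemma th1_brackets:
  assumes p: "p \<in> S3"
  shows "th1 \<phi> p (bracket X X p) = 0"
    "th1 \<phi> p (bracket (Zt \<phi>) Tf p) = - conn0 \<phi> p"
    "th1 \<phi> p (bracket (Ztb \<phi>) Tf p) = tors \<phi> p"
    "th1 \<phi> p (bracket (Ztb \<phi>) (Zt \<phi>) p) = conn2 \<phi> p"
    "th1 \<phi> p (bracket Tf (Zt \<phi>) p) = conn0 \<phi> p"
    "th1 \<phi> p (bracket Tf (Ztb \<phi>) p) = - tors \<phi> p"
    "th1 \<phi> p (bracket (Zt \<phi>) (Ztb \<phi>) p) = - conn2 \<phi> p"
proof -
  show "th1 \<phi> p (bracket X X p) = 0" by (simp add: bracket_self th1_vec3[OF g p])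
  show "th1 \<phi> p (bracket (Zt \<phi>) Tf p) = - conn0 \<phi> p"
    by (simp only: bracket_swap[of "Zt \<phi>" Tf] bracket_Tf_Zt[OF p] th1_qneg[OF p] conn0_def)
  show "th1 \<phi> p (bracket (Ztb \<phi>) Tf p) = tors \<phi> p"
    by (simp only: bracket_swap[of "Ztb \<phi>" Tf] bracket_Tf_Ztb[OF p] th1_qneg[OF p] tors_def)
  show "th1 \<phi> p (bracket (Ztb \<phi>) (Zt \<phi>) p) = conn2 \<phi> p"
    by (simp only: bracket_swap[of "Ztb \<phi>" "Zt \<phi>"] bracket_Zt_Ztb[OF p] th1_qneg[OF p] conn2_def)
  show "th1 \<phi> p (bracket Tf (Zt \<phi>) p) = conn0 \<phi> p" by (simp only: conn0_def)
  show "th1 \<phi> p (bracket Tf (Ztb \<phi>) p) = - tors \<phi> p" by (simp add: tors_def)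
  show "th1 \<phi> p (bracket (Zt \<phi>) (Ztb \<phi>) p) = - conn2 \<phi> p" by (simp add: conn2_def)
qed

lemma qconj_frame:
  "qconj (Tf p) = Tf p" "qconj (Zt \<phi> p) = Ztb \<phi> p" "qconj (Ztb \<phi> p) = Zt \<phi> p"
  by (simp_all add: Tf_vec3 Zt_vec3 Ztb_vec3 qconj_vec3)

lemma cder_Tf_cnj_phi:
  assumes p: "p \<in> S3"
  shows "cder Tf (\<lambda>q. cnj (\<phi> q)) p = cnj (cder Tf \<phi> p)"
  by (rule cder_cnj[of p Tf, OF p tangent_Tf admissible_differentiable[OF g p]]) (simp add: qconj_frame)

lemma cder_Tf_ht:
  assumes p: "p \<in> S3"
  shows "cder Tf (ht \<phi>) p = - (\<phi> p * cnj (cder Tf \<phi> p) + cnj (\<phi> p) * cder Tf \<phi> p)"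
proof -
  have e: "ht \<phi> = (\<lambda>q. 1 - \<phi> q * cnj (\<phi> q))" by (simp add: fun_eq_iff ht_eq)
  have "cder Tf (\<lambda>q. 1 - \<phi> q * cnj (\<phi> q)) p = cder Tf (\<lambda>q. 1) p - cder Tf (\<lambda>q. \<phi> q * cnj (\<phi> q)) p"
    by (rule cder_diff[of p Tf, OF p tangent_Tf])
        (auto intro!: differentiable_mult admissible_differentiable[OF g p]
        admissible_differentiable_cnj[OF g p])
  also have "\<dots> = - (\<phi> p * cder Tf (\<lambda>q. cnj (\<phi> q)) p + cnj (\<phi> p) * cder Tf \<phi> p)"
    using cder_const[of p Tf 1] cder_mult[of p Tf,
        OF p tangent_Tf admissible_differentiable[OF g p] admissible_differentiable_cnj[OF g p]] p
        tangent_Tf by simp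
  finally show ?thesis unfolding e cder_Tf_cnj_phi[OF p] .
qed

lemma conn0_eq:
  assumes p: "p \<in> S3"
  shows "conn0 \<phi> p = (-2 * \<i> - cnj (\<phi> p) * (cder Tf \<phi> p + 2 * \<i> * \<phi> p)) / ht \<phi> p"
  by (simp add: conn0_def bracket_Tf_Zt[OF p] th1_vec3[OF g p])

lemma tors_eq:
  assumes p: "p \<in> S3"
  shows "tors \<phi> p = (4 * \<i> * cnj (\<phi> p) - cder Tf (\<lambda>q. cnj (\<phi> q)) p) / ht \<phi> p"
  by (simp add: tors_def bracket_Tf_Ztb[OF p] th1_vec3[OF g p] diff_divide_distrib)

lemma conn2_eq:
  assumes p: "p \<in> S3"
  shows "conn2 \<phi> p = - (cder (Zt \<phi>) (\<lambda>q. cnj (\<phi> q)) p + cnj (\<phi> p) * cder (Ztb \<phi>) \<phi> p) / ht \<phi> p"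
  by (simp add: conn2_def bracket_Zt_Ztb[OF p] th1_vec3[OF g p] minus_divide_left)

lemma conn0_compatible:
  assumes p: "p \<in> S3"
  shows "conn0 \<phi> p + cnj (conn0 \<phi> p) = cder Tf (ht \<phi>) p / ht \<phi> p"
proof -
  have h: "ht \<phi> p \<noteq> 0" using ht_nonzero[OF g p] .
  have ch: "cnj (ht \<phi> p) = ht \<phi> p" by (rule cnj_ht)
  let ?T = "cder Tf \<phi> p" and ?f = "\<phi> p" and ?h = "ht \<phi> p"
  have cn: "cnj ((-2 * \<i> - cnj ?f * (?T + 2 * \<i> * ?f)) / ?h) = (2 * \<i> - ?f * (cnj ?T - 2 * \<i> * cnj ?f))
      / ?h"
    using ch by simp
  have num: "(-2 * \<i> - cnj ?f * (?T + 2 * \<i> * ?f)) + (2 * \<i> - ?f * (cnj ?T - 2 * \<i> * cnj ?f))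
      = - (?f * cnj ?T + cnj ?f * ?T)"
    by (simp add: algebra_simps)
  show ?thesis unfolding conn0_eq[OF p] cder_Tf_ht[OF p] cn
    by (simp only: add_divide_distrib[symmetric] num)
qed

lemma cnj_cder_Zt_ht:
  assumes p: "p \<in> S3"
  shows "cnj (cder (Zt \<phi>) (ht \<phi>) p) = cder (Ztb \<phi>) (ht \<phi>) p"
proof -
  have "cder (Ztb \<phi>) (\<lambda>q. cnj (ht \<phi> q)) p = cnj (cder (Zt \<phi>) (ht \<phi>) p)"
    by (rule cder_cnj[of p "Ztb \<phi>", OF p tangent_Ztb admissible_differentiable_ht[OF g p]])
        (simp add: qconj_frame)
  then show ?thesis by (simp add: cnj_ht)
qed

lemma tw_explicit:
  assumes p: "p \<in> S3"
  shows "tw \<phi> p = ((conn0 \<phi> p, conn1 \<phi> p, conn2 \<phi> p), tors \<phi> p)"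
proof -
  have h: "ht \<phi> p \<noteq> 0" using ht_nonzero[OF g p] .
  have ch: "cnj (ht \<phi> p) = ht \<phi> p" by (rule cnj_ht)
  have fr: "set (frame \<phi>) = {Tf, Zt \<phi>, Ztb \<phi>}" by (simp add: frame_def)
  note simps = fr dform1_th1_frame[OF p] th1_brackets[OF p] th1_frame[OF g p] frame_form_frame[OF g p]
      theta_frame[OF g p]
    qconj_frame wedge_def
  show ?thesis
    unfolding tw_def
  proof (rule the_equality, goal_cases)
    case 1
    show ?case
      using conn0_compatible[OF p] cnj_cder_Zt_ht[OF p] h ch by (simp add: simps conn1_def)
  next
    case (2 x)
    moreover obtain a b c A where x: "x = ((a, b, c), A)" by (cases x) auto
    ultimately have "a = conn0 \<phi> p" "A = tors \<phi> p" "c = conn2 \<phi> p"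
      and "b + cnj c = cder (Zt \<phi>) (ht \<phi>) p / ht \<phi> p"
      by (simp_all add: simps)
    then show ?case using x by (simp add: conn1_def algebra_simps)
  qed
qed

end

lemma jet_quot_conn0: "jet_quot 2 1 conn0"
proof -
  have "jet_quot 0 0 (\<lambda>\<phi> p. 2 * \<i> * \<phi> p)"
    by (rule jet_quot_mult_left0[OF jet_quot_const jet_quot_phi])
  then have "jet_quot 2 0 (\<lambda>\<phi> p. cder Tf \<phi> p + 2 * \<i> * \<phi> p)"
    by (rule jet_quot_add[OF jet_quot_Tf_phi jet_quot_mono0])
  then have "jet_quot 2 0 (\<lambda>\<phi> p. -2 * \<i> - cnj (\<phi> p) * (cder Tf \<phi> p + 2 * \<i> * \<phi> p))"
    by (rule jet_quot_diff[OF jet_quot_mono0[OF jet_quot_const] jet_quot_mult_left0[OF jet_quot_cnj_phi]])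
  from jet_quot_divide_ht[OF this, unfolded add_0] show ?thesis
    by (rule jet_quot_cong) (simp add: conn0_eq)
qed

lemma jet_quot_tors: "jet_quot 2 1 tors"
proof -
  have "jet_quot 0 0 (\<lambda>\<phi> p. 4 * \<i> * cnj (\<phi> p))"
    by (rule jet_quot_mult_left0[OF jet_quot_const jet_quot_cnj_phi])
  then have "jet_quot 2 0 (\<lambda>\<phi> p. 4 * \<i> * cnj (\<phi> p) - cder Tf (\<lambda>q. cnj (\<phi> q)) p)"
    by (rule jet_quot_diff[OF jet_quot_mono0 jet_quot_Tf_cnj_phi])
  from jet_quot_divide_ht[OF this, unfolded add_0] show ?thesis
    by (rule jet_quot_cong) (simp add: tors_eq)
qed

lemma jet_quot_conn2: "jet_quot 1 1 conn2"
proof -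
  have "jet_quot 1 0 (\<lambda>\<phi> p. - (cder (Zt \<phi>) (\<lambda>q. cnj (\<phi> q)) p + cnj (\<phi> p) * cder (Ztb \<phi>) \<phi> p))"
    by (intro jet_quot_neg jet_quot_add[OF jet_quot_Zt_cnj_phi] jet_quot_mult_left0[OF jet_quot_cnj_phi]
        jet_quot_Ztb_phi)
  from jet_quot_divide_ht[OF this, unfolded add_0] show ?thesis
    by (rule jet_quot_cong) (simp add: conn2_eq)
qed

lemma jet_quot_conn1: "jet_quot 1 1 conn1"
proof -
  have "jet_quot 1 1 (\<lambda>\<phi> p. cder (Zt \<phi>) (ht \<phi>) p / ht \<phi> p - cnj (conn2 \<phi> p))"
    using jet_quot_diff[OF jet_quot_divide_ht[OF jet_quot_Zt_ht, unfolded add_0] jet_quot_cnj[OF jet_quot_conn2]]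
    by simp
  then show ?thesis by (rule jet_quot_cong) (simp add: conn1_def)
qed

section \<open>Scalar curvature, Cartan tensor and obstruction density\<close>

context
  fixes \<phi> :: "pt \<Rightarrow> complex"
  assumes g: "admissible \<phi>"
begin

lemma omega_frame:
  assumes q: "q \<in> S3"
  shows "omega \<phi> q (Tf q) = conn0 \<phi> q" "omega \<phi> q (Zt \<phi> q) = conn1 \<phi> q" "omega \<phi> q (Ztb \<phi> q)
      = conn2 \<phi> q"
  by (simp_all add: omega_def tw_explicit[OF g q] frame_form_frame[OF g q])

lemma omega_vec3:
  assumes q: "q \<in> S3"
  shows "omega \<phi> q (vec3 q \<alpha> \<beta> \<gamma>) = conn0 \<phi> q * \<alpha> + conn1 \<phi> q * ((\<beta> - cnj (\<phi> q) * \<gamma>) / ht \<phi> q)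
       + conn2 \<phi> q * ((\<gamma> - \<phi> q * \<beta>) / ht \<phi> q)"
  by (simp add: omega_def tw_explicit[OF g q] frame_form_vec3[OF g q])

lemma omega_qneg:
  assumes q: "q \<in> S3"
  shows "omega \<phi> q (qneg (vec3 q \<alpha> \<beta> \<gamma>)) = - omega \<phi> q (vec3 q \<alpha> \<beta> \<gamma>)"
proof -
  have "omega \<phi> q (qneg (vec3 q \<alpha> \<beta> \<gamma>)) = omega \<phi> q (vec3 q (-\<alpha>) (-\<beta>) (-\<gamma>))" by (simp add: qneg_vec3)
  also have "\<dots> = - omega \<phi> q (vec3 q \<alpha> \<beta> \<gamma>)"
    unfolding omega_vec3[OF q] by (simp add: diff_divide_distrib algebra_simps)
  finally show ?thesis .
qed

lemma bracket_frame_vec3: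
  assumes p: "p \<in> S3" and X: "X \<in> set (frame \<phi>)" and Y: "Y \<in> set (frame \<phi>)"
  shows "\<exists>\<alpha> \<beta> \<gamma>. bracket X Y p = vec3 p \<alpha> \<beta> \<gamma>"
proof -
  have sw: "\<exists>\<alpha> \<beta> \<gamma>. bracket Y X p = vec3 p \<alpha> \<beta> \<gamma>" if "bracket X Y p = vec3 p a b c" for X Y a b c
    using that by (auto simp: bracket_swap[of Y X] qneg_vec3)
  have k: "\<exists>\<alpha> \<beta> \<gamma>. bracket Tf (Zt \<phi>) p = vec3 p \<alpha> \<beta> \<gamma>" "\<exists>\<alpha> \<beta> \<gamma>. bracket Tf (Ztb \<phi>) p = vec3 p \<alpha> \<beta> \<gamma>"
     "\<exists>\<alpha> \<beta> \<gamma>. bracket (Zt \<phi>) (Ztb \<phi>) p = vec3 p \<alpha> \<beta> \<gamma>"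
    using bracket_Tf_Zt[OF g p] bracket_Tf_Ztb[OF g p] bracket_Zt_Ztb[OF g p] by blast+
  show ?thesis using X Y k sw[of Tf "Zt \<phi>"] sw[of Tf "Ztb \<phi>"] sw[of "Zt \<phi>" "Ztb \<phi>"]
    by (auto simp: frame_def bracket_self) blast+
qed

lemma dform1_omega_swap:
  assumes p: "p \<in> S3" and X: "X \<in> set (frame \<phi>)" and Y: "Y \<in> set (frame \<phi>)"
  shows "dform1 (omega \<phi>) Y X p = - dform1 (omega \<phi>) X Y p"
proof -
  obtain \<alpha> \<beta> \<gamma> where b: "bracket X Y p = vec3 p \<alpha> \<beta> \<gamma>" using bracket_frame_vec3[OF p X Y] by blast
  have "omega \<phi> p (bracket Y X p) = - omega \<phi> p (bracket X Y p)"
    unfolding bracket_swap[of Y X] b by (rule omega_qneg[OF p])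
  then show ?thesis by (simp add: dform1_def)
qed

lemma dform1_omega_self:
  assumes p: "p \<in> S3"
  shows "dform1 (omega \<phi>) X X p = 0"
  by (simp add: dform1_def bracket_self omega_vec3[OF p])

lemma scal_eq_dform1:
  assumes p: "p \<in> S3"
  shows "scal \<phi> p = dform1 (omega \<phi>) (Zt \<phi>) (Ztb \<phi>) p / ht \<phi> p"
proof -
  have h: "ht \<phi> p \<noteq> 0" using ht_nonzero[OF g p] .
  have fr: "set (frame \<phi>) = {Tf, Zt \<phi>, Ztb \<phi>}" by (simp add: frame_def)
  have fm: "Tf \<in> set (frame \<phi>)" "Zt \<phi> \<in> set (frame \<phi>)" "Ztb \<phi> \<in> set (frame \<phi>)"
    by (simp_all add: frame_def)
  have as: "dform1 (omega \<phi>) (Zt \<phi>) Tf p = - dform1 (omega \<phi>) Tf (Zt \<phi>) p"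
    "dform1 (omega \<phi>) (Ztb \<phi>) Tf p = - dform1 (omega \<phi>) Tf (Ztb \<phi>) p"
    "dform1 (omega \<phi>) (Ztb \<phi>) (Zt \<phi>) p = - dform1 (omega \<phi>) (Zt \<phi>) (Ztb \<phi>) p"
    using dform1_omega_swap[OF p] fm by blast+
  note simps = fr as dform1_omega_self[OF p] th1_frame[OF g p] theta_frame[OF g p]
    frame_form_frame[OF g p] wedge_def
  show ?thesis
    unfolding scal_def
  proof (rule the_equality, goal_cases)
    case 1
    show ?case
      by (rule exI[of _ "(0, dform1 (omega \<phi>) Tf (Zt \<phi>) p, dform1 (omega \<phi>) Tf (Ztb \<phi>) p)"])
         (use h in \<open>simp add: simps\<close>)
  next
    case (2 r)
    then obtain bv where "dform1 (omega \<phi>) (Zt \<phi>) (Ztb \<phi>) p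
        - r * ht \<phi> p * wedge (th1 \<phi> p) (th1b \<phi> p) (Zt \<phi> p) (Ztb \<phi> p)
        = wedge (theta p) (frame_form \<phi> p bv) (Zt \<phi> p) (Ztb \<phi> p)" using fm by blast
    then have "dform1 (omega \<phi>) (Zt \<phi>) (Ztb \<phi>) p = r * ht \<phi> p"
      by (simp add: th1_frame[OF g p] theta_frame[OF g p] wedge_def)
    then show ?case using h by simp
  qed
qed

lemma scal_explicit:
  assumes p: "p \<in> S3"
  shows "scal \<phi> p = (cder (Zt \<phi>) (conn2 \<phi>) p - cder (Ztb \<phi>) (conn1 \<phi>) p
     + \<i> * ht \<phi> p * conn0 \<phi> p + conn1 \<phi> p * conn2 \<phi> p
     + conn2 \<phi> p * (cder (Ztb \<phi>) \<phi> p + \<phi> p * cder (Zt \<phi>) (\<lambda>q. cnj (\<phi> q)) p) / ht \<phi> p) / ht \<phi> p"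
proof -
  have a: "cder (Zt \<phi>) (\<lambda>q. omega \<phi> q (Ztb \<phi> q)) p = cder (Zt \<phi>) (conn2 \<phi>) p"
    by (rule cder_S3_cong[OF p]) (simp add: omega_frame)
  have b: "cder (Ztb \<phi>) (\<lambda>q. omega \<phi> q (Zt \<phi> q)) p = cder (Ztb \<phi>) (conn1 \<phi>) p"
    by (rule cder_S3_cong[OF p]) (simp add: omega_frame)
  have c: "(cder (Zt \<phi>) (\<lambda>q. cnj (\<phi> q)) p - cnj (\<phi> p) * - cder (Ztb \<phi>) \<phi> p) / ht \<phi> p = - conn2 \<phi> p"
    by (simp add: conn2_eq[OF g p] minus_divide_left)
  show ?thesis
    unfolding scal_eq_dform1[OF p] dform1_def a b bracket_Zt_Ztb[OF g p] omega_vec3[OF p] c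
    by (simp add: algebra_simps minus_divide_left[symmetric] add_divide_distrib[symmetric])
qed

end

lemma jet_quot_scal: "jet_quot 2 3 scal"
proof -
  have "jet_quot 2 2 (\<lambda>\<phi> p. cder (Zt \<phi>) (conn2 \<phi>) p)"
    and "jet_quot 2 2 (\<lambda>\<phi> p. cder (Ztb \<phi>) (conn1 \<phi>) p)"
    using jet_quot_Zt[OF jet_quot_conn2] jet_quot_Ztb[OF jet_quot_conn1] by (simp_all add: numeral_2_eq_2)
  moreover have "jet_quot 2 2 (\<lambda>\<phi> p. \<i> * ht \<phi> p * conn0 \<phi> p)"
    using jet_quot_mono[OF jet_quot_mult_left0[OF jet_quot_mult_left0[OF jet_quot_const jet_quot_ht]
        jet_quot_conn0], of 2 2] by simp
  moreover have "jet_quot 2 2 (\<lambda>\<phi> p. conn1 \<phi> p * conn2 \<phi> p)"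
    using jet_quot_mult[OF jet_quot_conn1 jet_quot_conn2] by (simp add: numeral_2_eq_2)
  moreover have "jet_quot 1 0 (\<lambda>\<phi> p. cder (Ztb \<phi>) \<phi> p + \<phi> p * cder (Zt \<phi>) (\<lambda>q. cnj (\<phi> q)) p)"
    by (rule jet_quot_add[OF jet_quot_Ztb_phi jet_quot_mult_left0[OF jet_quot_phi jet_quot_Zt_cnj_phi]])
  then have "jet_quot 2 2 (\<lambda>\<phi> p. conn2 \<phi> p * (cder (Ztb \<phi>) \<phi> p
      + \<phi> p * cder (Zt \<phi>) (\<lambda>q. cnj (\<phi> q)) p) / ht \<phi> p)"
    using jet_quot_divide_ht[OF jet_quot_mult[OF jet_quot_conn2]] by (simp add: numeral_2_eq_2)
  ultimately have "jet_quot 2 3 (\<lambda>\<phi> p. (cder (Zt \<phi>) (conn2 \<phi>) p - cder (Ztb \<phi>) (conn1 \<phi>) p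
     + \<i> * ht \<phi> p * conn0 \<phi> p + conn1 \<phi> p * conn2 \<phi> p
     + conn2 \<phi> p * (cder (Ztb \<phi>) \<phi> p + \<phi> p * cder (Zt \<phi>) (\<lambda>q. cnj (\<phi> q)) p) / ht \<phi> p) / ht \<phi> p)"
    by (intro jet_quot_divide_ht[where k=2, simplified] jet_quot_add jet_quot_diff)
  then show ?thesis by (rule jet_quot_cong) (simp add: scal_explicit)
qed

lemma jet_quot_cov_Zt:
  assumes J: "jet_quot n k F"
  shows "jet_quot (Suc n) (Suc k) (\<lambda>\<phi> p. cov \<phi> m 0 (Zt \<phi>) (F \<phi>) p)"
proof -
  have "jet_quot (Suc n) (Suc k) (\<lambda>\<phi> p. cder (Zt \<phi>) (F \<phi>) p - of_int m * conn1 \<phi> p * F \<phi> p)"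
    using jet_quot_diff[OF jet_quot_Zt[OF J] jet_quot_mult[OF jet_quot_mult_left0[OF jet_quot_const
        jet_quot_conn1] J, unfolded add.commute[of 1]]] by simp
  then show ?thesis by (rule jet_quot_cong) (simp add: cov_def omega_frame)
qed

lemma jet_quot_cov_Ztb:
  assumes J: "jet_quot n k F"
  shows "jet_quot (Suc n) (Suc k) (\<lambda>\<phi> p. cov \<phi> m 0 (Ztb \<phi>) (F \<phi>) p)"
proof -
  have "jet_quot (Suc n) (Suc k) (\<lambda>\<phi> p. cder (Ztb \<phi>) (F \<phi>) p - of_int m * conn2 \<phi> p * F \<phi> p)"
    using jet_quot_diff[OF jet_quot_Ztb[OF J] jet_quot_mult[OF jet_quot_mult_left0[OF jet_quot_const
        jet_quot_conn2] J, unfolded add.commute[of 1]]] by simp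
  then show ?thesis by (rule jet_quot_cong) (simp add: cov_def omega_frame)
qed

lemma jet_quot_cov_Tf:
  assumes J: "jet_quot n k F"
  shows "jet_quot (Suc (Suc n)) (Suc k) (\<lambda>\<phi> p. cov \<phi> m 0 Tf (F \<phi>) p)"
proof -
  have "jet_quot (Suc (Suc n)) (Suc k) (\<lambda>\<phi> p. cder Tf (F \<phi>) p - of_int m * conn0 \<phi> p * F \<phi> p)"
    using jet_quot_diff[OF jet_quot_Tf[OF J] jet_quot_mult[OF jet_quot_mult_left0[OF jet_quot_const
        jet_quot_conn0] J, unfolded add.commute[of 1] add.commute[of 2]]] by (simp add: numeral_2_eq_2)
  then show ?thesis by (rule jet_quot_cong) (simp add: cov_def omega_frame)
qed

lemma jet_quot_A11: "jet_quot 2 1 A11"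
proof -
  have "jet_quot 2 1 (\<lambda>\<phi> p. cnj (ht \<phi> p * tors \<phi> p))"
    by (rule jet_quot_cnj[OF jet_quot_mult_left0[OF jet_quot_ht jet_quot_tors]])
  then show ?thesis by (rule jet_quot_cong) (simp add: A11_def Abb_def torsion_def tw_explicit)
qed

lemma jet_quot_Aup: "jet_quot 2 3 Aup"
proof -
  have "jet_quot 2 3 (\<lambda>\<phi> p. inverse (ht \<phi> p) * inverse (ht \<phi> p) * (ht \<phi> p * tors \<phi> p))"
    using jet_quot_mult[OF jet_quot_mult[OF jet_quot_inverse_ht jet_quot_inverse_ht]
        jet_quot_mult_left0[OF jet_quot_ht jet_quot_tors]] by (simp add: numeral_3_eq_3 numeral_2_eq_2)
  then show ?thesis by (rule jet_quot_cong) (simp add: Aup_def Abb_def torsion_def tw_explicit)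
qed

lemma jet_quot_Q11: "jet_quot 4 5 Q11"
proof -
  have S1: "jet_quot 3 4 (\<lambda>\<phi> p. cov \<phi> 0 0 (Zt \<phi>) (scal \<phi>) p)"
    using jet_quot_cov_Zt[OF jet_quot_scal] by (simp add: numeral_3_eq_3 numeral_eq_Suc)
  have S2: "jet_quot 4 5 (\<lambda>\<phi> p. cov \<phi> 1 0 (Zt \<phi>) (\<lambda>q. cov \<phi> 0 0 (Zt \<phi>) (scal \<phi>) q) p)"
    using jet_quot_cov_Zt[OF S1] by (simp add: numeral_eq_Suc)
  have RA: "jet_quot 4 5 (\<lambda>\<phi> p. scal \<phi> p * A11 \<phi> p)"
    using jet_quot_mono[OF jet_quot_mult[OF jet_quot_scal jet_quot_A11], of 4 5] by simp
  have TA: "jet_quot 4 5 (\<lambda>\<phi> p. cov \<phi> 2 0 Tf (A11 \<phi>) p)"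
    using jet_quot_mono[OF jet_quot_cov_Tf[OF jet_quot_A11], of 4 5] by (simp add: numeral_eq_Suc)
  have Ai: "jet_quot 3 3 (\<lambda>\<phi> q. inverse (ht \<phi> q) * cov \<phi> 2 0 (Ztb \<phi>) (A11 \<phi>) q)"
    using jet_quot_inverse_ht_mult[OF jet_quot_cov_Ztb[OF jet_quot_A11]] by (simp add: numeral_eq_Suc)
  have ZAi: "jet_quot 4 5
      (\<lambda>\<phi> p. cov \<phi> 1 0 (Zt \<phi>) (\<lambda>q. inverse (ht \<phi> q) * cov \<phi> 2 0 (Ztb \<phi>) (A11 \<phi>) q) p)"
    using jet_quot_mono[OF jet_quot_cov_Zt[OF Ai], of 4 5] by (simp add: numeral_eq_Suc)
  have "jet_quot 4 5 (\<lambda>\<phi> p. - (1/6) * cov \<phi> 1 0 (Zt \<phi>) (cov \<phi> 0 0 (Zt \<phi>) (scal \<phi>)) p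
     - (\<i>/2) * scal \<phi> p * A11 \<phi> p
     + cov \<phi> 2 0 Tf (A11 \<phi>) p
     + (2*\<i>/3) * cov \<phi> 1 0 (Zt \<phi>)
                   (\<lambda>q. inverse (ht \<phi> q) * cov \<phi> 2 0 (Ztb \<phi>) (A11 \<phi>) q) p)"
    using jet_quot_add[OF jet_quot_add[OF jet_quot_diff[OF
        jet_quot_mult_left0[OF jet_quot_const[of "- (1/6)"] S2]
        jet_quot_mult_left0[OF jet_quot_const[of "\<i>/2"] RA]] TA]
      jet_quot_mult_left0[OF jet_quot_const[of "2*\<i>/3"] ZAi]]
    by (simp add: mult.assoc)
  then show ?thesis by (rule jet_quot_cong) (simp add: Q11_def)
qed

lemma jet_quot_obstruction: "jet_quot 6 9 obstruction"
proof -
  have a: "jet_quot 5 6 (\<lambda>\<phi> q. cov \<phi> 2 0 (Ztb \<phi>) (Q11 \<phi>) q)"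
    using jet_quot_cov_Ztb[OF jet_quot_Q11] by (simp add: numeral_eq_Suc)
  have b: "jet_quot 5 7 (\<lambda>\<phi> q. inverse (ht \<phi> q) * cov \<phi> 2 0 (Ztb \<phi>) (Q11 \<phi>) q)"
    using jet_quot_inverse_ht_mult[OF a] by (simp add: numeral_eq_Suc)
  have c: "jet_quot 6 8
      (\<lambda>\<phi> p. cov \<phi> 1 0 (Ztb \<phi>) (\<lambda>q. inverse (ht \<phi> q) * cov \<phi> 2 0 (Ztb \<phi>) (Q11 \<phi>) q) p)"
    using jet_quot_cov_Ztb[OF b] by (simp add: numeral_eq_Suc)
  have d: "jet_quot 6 9 (\<lambda>\<phi> p. inverse (ht \<phi> p)
      * cov \<phi> 1 0 (Ztb \<phi>) (\<lambda>q. inverse (ht \<phi> q) * cov \<phi> 2 0 (Ztb \<phi>) (Q11 \<phi>) q) p)"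
    using jet_quot_inverse_ht_mult[OF c] by (simp add: numeral_eq_Suc)
  have e: "jet_quot 6 9 (\<lambda>\<phi> p. \<i> * Aup \<phi> p * Q11 \<phi> p)"
    using jet_quot_mono[OF jet_quot_mult[OF jet_quot_mult_left0[OF jet_quot_const[of \<i>] jet_quot_Aup]
        jet_quot_Q11], of 6 9] by simp
  have "jet_quot 6 9 (\<lambda>\<phi> p. (1/3) *
     (inverse (ht \<phi> p) * cov \<phi> 1 0 (Ztb \<phi>)
        (\<lambda>q. inverse (ht \<phi> q) * cov \<phi> 2 0 (Ztb \<phi>) (Q11 \<phi>) q) p
      - \<i> * Aup \<phi> p * Q11 \<phi> p))"
    by (rule jet_quot_mult_left0[OF jet_quot_const[of "1/3"] jet_quot_diff[OF d e]])
  then show ?thesis by (rule jet_quot_cong) (simp add: obstruction_def)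
qed

theorem lemma4p4:
  "\<exists>P :: jetpoly. (\<forall>m\<in>set P. mon_order (snd m) \<le> 6) \<and>
     (\<forall>\<phi>. smoothS3 \<phi> \<and> (\<forall>p\<in>S3. cmod (\<phi> p) < 1) \<longrightarrow>
        (\<forall>p\<in>S3. obstruction \<phi> p
                   = polyval P \<phi> p / (complex_of_real (1 - (cmod (\<phi> p))\<^sup>2)) ^ 9))"
  using jet_quot_obstruction unfolding jet_quot_def poly_order_le_def admissible_def ht_def by blast

end
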